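(* Suppose $\sigma^2>0=\lambda(\mathbb R)$ (so $\psi(\beta)=\tfrac12\sigma^2\beta^2+\mu\beta$ and $\psi^h(\beta)=\mu\frac{e^{\beta h}-e^{-\beta h}}{2h}+\sigma^2\frac{e^{\beta h}+e^{-\beta h}-2}{2h^2}$), and let $q\ge0$. If $q=\mu=0$, then $\Delta^{(q)}_W(x,h)=0$ for all $h\in(0,h_\star)$ and $x\in\mathbb Z_h^{++}$. If $q\vee|\mu|>0$, then: (i) there exist $A_0,h_0\in(0,\infty)$ such that for all $h\in(0,h_0)$ and all $x\in\mathbb Z_h^{++}$ with $xh^2\le1$: $|\Delta^{(q)}_W(x,h)|\le A_0h^2(1+x)e^{\alpha_+x}$; (ii) for any nested sequence $h_n\downarrow0$ (i.e. $h_n/h_{n+1}\in\mathbb N$) and any $x\in\bigcup_n\mathbb Z_{h_n}^{++}$, $$\lim_{n\to\infty}\frac{\Delta^{(q)}_W(x,h_n)}{h_n^2}=\frac{q^2}{2(\mu^2+2\sigma^2q)}W^{(q)}(x)+\frac{x}{\sqrt{\mu^2+2\sigma^2q}}\bigl(e^{\alpha_+x}\theta_+-e^{\alpha_-x}\theta_-\bigr)$$ (for $q=0$ this limit equals $-\frac23\frac{\mu^2x}{(\sigma^2)^3}e^{-2\mu x/\sigma^2}$), where $\alpha_\pm=\frac{-\mu\pm\sqrt{\mu^2+2q\sigma^2}}{\sigma^2}$ and $\theta_\pm=\frac{\mu^3\sqrt{2q\sigma^2+\mu^2}\pm(\frac12q^2(\sigma^2)^2-\mu^4-\mu^2\sig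ma^2q)}{3(\sigma^2)^3\sqrt{2q\sigma^2+\mu^2}}$.
   Context: $X$ is the Lévy process $\sigma B_t+\mu t$ ($B$ standard Brownian motion, $\sigma^2>0$). For $h>0$, $\mathbb Z_h=h\mathbb Z$, $\mathbb Z_h^{++}=\mathbb Z_h\cap(0,\infty)$; $h_\star>0$ is such that for $h\in(0,h_\star)$ the function $\psi^h$ above is the Laplace exponent of a compound Poisson process on $\mathbb Z_h$. For $q\ge0$: $\Phi(q)$, $\Phi^h(q)$ are the largest roots of $\psi=q$, $\psi^h=q$ on $[0,\infty)$; $W^{(q)}$ vanishes on $(-\infty,0)$ and is the continuous nondecreasing function on $[0,\infty)$ with Laplace transform $1/(\psi(\beta)-q)$ for $\beta>\Phi(q)$ (explicitly $W^{(q)}(x)=(e^{\alpha_+x}-e^{\alpha_-x})/\sqrt{\mu^2+2\sigma^2q}$ when $q\vee|\mu|>0$); $W^{(q)}_h$ vanishes on $(-\infty,0)$ and on $[0,\infty)$ is the unique right-continuous function constant on each $[kh,(k+1)h)$, of exponential order, with Laplace transform $\frac{e^{\beta h}-1}{\beta h(\psi^h(\beta)-q)}$ for $\beta>\Phi^h(q)$. $\Delta^{(q)}_W(x,h):=W^{(q)}(x)-W^{(q)}_h(x-h)$. *)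

theory Defs
  imports "HOL-Analysis.Analysis"
begin

text \<open>Brownian motion with drift: X_t = sigma B_t + mu t, s2 = sigma^2 > 0.\<close>

definition psi :: "real \<Rightarrow> real \<Rightarrow> real \<Rightarrow> real" where
  "psi s2 mu \<beta> = s2 * \<beta>^2 / 2 + mu * \<beta>"

definition psi_h :: "real \<Rightarrow> real \<Rightarrow> real \<Rightarrow> real \<Rightarrow> real" where
  "psi_h s2 mu h \<beta> = mu * (exp (\<beta> * h) - exp (- \<beta> * h)) / (2 * h)
      + s2 * (exp (\<beta> * h) + exp (- \<beta> * h) - 2) / (2 * h^2)"

definition Phi_h :: "real \<Rightarrow> real \<Rightarrow> real \<Rightarrow> real \<Rightarrow> real" where
  "Phi_h s2 mu h q = (GREATEST b. 0 \<le> b \<and> psi_h s2 mu h b = q)"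

definition alpha_plus :: "real \<Rightarrow> real \<Rightarrow> real \<Rightarrow> real" where
  "alpha_plus s2 mu q = (- mu + sqrt (mu^2 + 2 * q * s2)) / s2"

definition alpha_minus :: "real \<Rightarrow> real \<Rightarrow> real \<Rightarrow> real" where
  "alpha_minus s2 mu q = (- mu - sqrt (mu^2 + 2 * q * s2)) / s2"

definition theta_plus :: "real \<Rightarrow> real \<Rightarrow> real \<Rightarrow> real" where
  "theta_plus s2 mu q = (mu^3 * sqrt (2 * q * s2 + mu^2)
      + (q^2 * s2^2 / 2 - mu^4 - mu^2 * s2 * q)) / (3 * s2^3 * sqrt (2 * q * s2 + mu^2))"

definition theta_minus :: "real \<Rightarrow> real \<Rightarrow> real \<Rightarrow> real" where
  "theta_minus s2 mu q = (mu^3 * sqrt (2 * q * s2 + mu^2)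
      - (q^2 * s2^2 / 2 - mu^4 - mu^2 * s2 * q)) / (3 * s2^3 * sqrt (2 * q * s2 + mu^2))"

definition W :: "real \<Rightarrow> real \<Rightarrow> real \<Rightarrow> real \<Rightarrow> real" where
  "W s2 mu q x =
     (if x < 0 then 0
      else if max q \<bar>mu\<bar> > 0 then
        (exp (alpha_plus s2 mu q * x) - exp (alpha_minus s2 mu q * x)) / sqrt (mu^2 + 2 * s2 * q)
      else 2 * x / s2)"

definition is_W_h :: "real \<Rightarrow> real \<Rightarrow> real \<Rightarrow> real \<Rightarrow> (real \<Rightarrow> real) \<Rightarrow> bool" where
  "is_W_h s2 mu h q f \<longleftrightarrow>
     (\<forall>x<0. f x = 0) \<and>
     (\<forall>x\<ge>0. continuous (at_right x) f) \<and>
     (\<forall>k::nat. \<forall>x\<in>{real k * h..<(real k + 1) * h}. f x = f (real k * h)) \<and>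
     (\<exists>C c. \<forall>x\<ge>0. \<bar>f x\<bar> \<le> C * exp (c * x)) \<and>
     (\<forall>\<beta> > Phi_h s2 mu h q.
        ((\<lambda>x. exp (- \<beta> * x) * f x) has_integral
           ((exp (\<beta> * h) - 1) / (\<beta> * h * (psi_h s2 mu h \<beta> - q)))) {0..})"

definition W_h :: "real \<Rightarrow> real \<Rightarrow> real \<Rightarrow> real \<Rightarrow> real \<Rightarrow> real" where
  "W_h s2 mu h q = (THE f. is_W_h s2 mu h q f)"

definition Delta_W :: "real \<Rightarrow> real \<Rightarrow> real \<Rightarrow> real \<Rightarrow> real \<Rightarrow> real" where
  "Delta_W s2 mu q x h = W s2 mu q x - W_h s2 mu h q (x - h)"

definition Zpp :: "real \<Rightarrow> real set" where
  "Zpp h = {x. \<exists>k::int. x = real_of_int k * h} \<inter> {0<..}"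

end

theory Submission
  imports Defs "HOL-Real_Asymp.Real_Asymp"
begin

text \<open>
  On the grid \<open>h\<int>\<close> a step function has a power series in \<open>exp (-\<beta>*h)\<close> as Laplace transform,
  so \<open>W_h\<close> is determined by its transform and can be computed by partial fractions: with
  \<open>E = exp (\<beta>*h)\<close>, the equation \<open>\<psi>\<^sup>h(\<beta>) = q\<close> is a quadratic equation in \<open>E\<close> with roots
  \<open>r\<^sub>\<plusminus>(h)\<close>, and \<open>W_h (k*h) = (r\<^sub>+\<^bsup>k+1\<^esup> - r\<^sub>-\<^bsup>k+1\<^esup>) / S\<^sub>h\<close> with
  \<open>S\<^sub>h = sqrt (\<mu>\<^sup>2 + 2*q*\<sigma>\<^sup>2 + q\<^sup>2*h\<^sup>2)\<close> (and \<open>2*(k+1)*h/\<sigma>\<^sup>2\<close> when \<open>q = \<mu> = 0\<close>).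
  Hence \<open>\<Delta>\<^sub>W(k*h, h)\<close> compares \<open>exp (\<alpha>\<^sub>\<plusminus>*x)\<close> with \<open>r\<^sub>\<plusminus>\<^sup>k = exp (x * L\<^sub>\<plusminus>)\<close>, where
  \<open>L\<^sub>\<plusminus> = ln r\<^sub>\<plusminus> / h\<close> are roots of \<open>\<psi>\<^sup>h = q\<close> converging to the roots \<open>\<alpha>\<^sub>\<plusminus>\<close> of \<open>\<psi> = q\<close>.
  Expanding \<open>\<psi>\<^sup>h\<close> to fourth order in \<open>h\<close> gives \<open>L\<^sub>\<plusminus> = \<alpha>\<^sub>\<plusminus> - \<theta>\<^sub>\<plusminus>*h\<^sup>2 + o(h\<^sup>2)\<close>, and
  \<open>1/S\<^sub>0 - 1/S\<^sub>h \<sim> q\<^sup>2*h\<^sup>2/(2*S\<^sub>0\<^sup>3)\<close>; these give both the bound for \<open>x*h\<^sup>2 \<le> 1\<close> and the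
  limit of \<open>\<Delta>\<^sub>W/h\<^sup>2\<close>.
\<close>

section \<open>Laplace transforms of grid step functions\<close>

lemma nat_floor_divide_eq:
  fixes h y :: real and k :: nat
  assumes "h > 0" "real k * h \<le> y" "y < (real k + 1) * h"
  shows "nat \<lfloor>y/h\<rfloor> = k"
proof -
  have "\<lfloor>y/h\<rfloor> = int k" using assms by (subst floor_eq_iff) (auto simp: field_simps)
  then show ?thesis by simp
qed

lemma nat_floor_divide_bounds:
  fixes h x :: real
  assumes h: "h > 0" and x: "x \<ge> 0"
  shows "real (nat \<lfloor>x/h\<rfloor>) * h \<le> x" "x < (real (nat \<lfloor>x/h\<rfloor>) + 1) * h"
proof -
  have fl: "real_of_int \<lfloor>x/h\<rfloor> \<le> x/h" "x/h < real_of_int \<lfloor>x/h\<rfloor> + 1" by linarith+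
  have nat_eq: "real (nat \<lfloor>x/h\<rfloor>) = real_of_int \<lfloor>x/h\<rfloor>" using x h by simp
  show "real (nat \<lfloor>x/h\<rfloor>) * h \<le> x"
    using mult_right_mono[OF fl(1), of h] h unfolding nat_eq by simp
  show "x < (real (nat \<lfloor>x/h\<rfloor>) + 1) * h"
    using mult_strict_right_mono[OF fl(2) h] h unfolding nat_eq by simp
qed

lemma has_integral_Ico_extend:
  fixes g :: "real \<Rightarrow> real"
  assumes "0 \<le> a" "a \<le> b" "(g has_integral I) {a..b}"
  shows "((\<lambda>x. if a \<le> x \<and> x < b then g x else 0) has_integral I) {0..}"
proof -
  have "((\<lambda>x. if a \<le> x \<and> x < b then g x else 0) has_integral I) {a..b}"
    by (rule has_integral_spike_finite[of "{b}" _ _ g]) (use assms in auto)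
  then show ?thesis
    by (rule has_integral_on_superset) (use assms in auto)
qed

lemma has_integral_exp_neg_interval:
  fixes a b \<beta> :: real
  assumes "a \<le> b" "\<beta> \<noteq> 0"
  shows "((\<lambda>x. exp (-\<beta>*x)) has_integral (exp (-\<beta>*a) - exp (-\<beta>*b))/\<beta>) {a..b}"
proof -
  have "((\<lambda>x. exp (-\<beta>*x)) has_integral (- exp (-\<beta>*b)/\<beta> - - exp (-\<beta>*a)/\<beta>)) {a..b}"
  proof (rule fundamental_theorem_of_calculus[OF \<open>a \<le> b\<close>])
    show "((\<lambda>x. - exp (-\<beta>*x)/\<beta>) has_vector_derivative exp (-\<beta>*x)) (at x within {a..b})" for x
      unfolding has_real_derivative_iff_has_vector_derivative [symmetric]
      using \<open>\<beta> \<noteq> 0\<close> by (auto intro!: derivative_eq_intros)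
  qed
  then show ?thesis by (simp add: diff_divide_distrib)
qed

lemma step_exponential_bound:
  fixes w :: "nat \<Rightarrow> real"
  assumes h: "h > 0" and R: "1 \<le> R" and wb: "\<And>k. \<bar>w k\<bar> \<le> C * R^k" and x: "x \<ge> 0"
  shows "\<bar>w (nat \<lfloor>x/h\<rfloor>)\<bar> \<le> C * exp (ln R / h * x)"
proof -
  define k where "k = nat \<lfloor>x/h\<rfloor>"
  have "real k \<le> x/h" using nat_floor_divide_bounds[OF h x] h by (simp add: k_def field_simps)
  then have "real k * ln R \<le> ln R / h * x"
    using R mult_right_mono[of "real k" "x/h" "ln R"] by (simp add: mult.commute)
  moreover have "R^k = exp (real k * ln R)" using R by (simp add: exp_of_nat_mult)
  ultimately have "R^k \<le> exp (ln R / h * x)" by simp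
  moreover have "C \<ge> 0" using wb[of 0] by simp
  ultimately show ?thesis
    using wb[of k] unfolding k_def[symmetric] by (meson mult_left_mono order_trans)
qed

lemma summable_geometric_bound:
  fixes w :: "nat \<Rightarrow> real"
  assumes wb: "\<And>k. \<bar>w k\<bar> \<le> C * R^k" and z: "R * \<bar>z\<bar> < 1" and R: "0 \<le> R"
  shows "summable (\<lambda>k. w k * z^k)"
proof (rule summable_comparison_test')
  show "summable (\<lambda>k. C * (R * \<bar>z\<bar>)^k)"
    by (intro summable_mult summable_geometric) (use z R in simp)
  show "norm (w k * z^k) \<le> C * (R * \<bar>z\<bar>)^k" for k
    using mult_right_mono[OF wb[of k], of "\<bar>z\<bar>^k"]
    by (simp add: abs_mult power_abs power_mult_distrib mult_ac)
qed

lemma has_integral_step_truncated: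
  fixes h \<beta> :: real and w :: "nat \<Rightarrow> real" and f :: "real \<Rightarrow> real"
  assumes h: "h > 0" and \<beta>: "\<beta> \<noteq> 0" and fw: "\<And>x. x \<ge> 0 \<Longrightarrow> f x = w (nat \<lfloor>x/h\<rfloor>)"
  shows "((\<lambda>x. if x < real n * h then exp (-\<beta>*x) * f x else 0) has_integral
           (1 - exp (-\<beta>*h))/\<beta> * (\<Sum>k<n. w k * exp (-\<beta>*h)^k)) {0..}"
proof (induction n)
  case 0
  show ?case by (rule has_integral_eq[of _ "\<lambda>_. 0"]) auto
next
  case (Suc n)
  define z where "z = exp (-\<beta>*h)"
  have z_pow: "exp (-\<beta>*(real m*h)) = z^m" for m
    by (simp add: z_def exp_of_nat_mult[symmetric] mult_ac)
  have "((\<lambda>x. exp (-\<beta>*x)) has_integral (z^n - z^Suc n)/\<beta>) {real n * h..real (Suc n) * h}"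
    using has_integral_exp_neg_interval[of "real n * h" "real (Suc n) * h" \<beta>] h \<beta>
    unfolding z_pow by simp
  then have piece: "((\<lambda>x. if real n * h \<le> x \<and> x < real (Suc n) * h then w n * exp (-\<beta>*x) else 0)
          has_integral w n * ((z^n - z^Suc n)/\<beta>)) {0..}"
    using h by (intro has_integral_Ico_extend has_integral_mult_right) auto
  have sum_eq: "(1 - z)/\<beta> * (\<Sum>k<n. w k * z^k) + w n * ((z^n - z^Suc n)/\<beta>)
      = (1 - z)/\<beta> * (\<Sum>k<Suc n. w k * z^k)"
    using \<beta> by (simp add: field_simps)
  have fx: "f x = w n" if "x \<ge> 0" "real n * h \<le> x" "x < real (Suc n) * h" for x
    using fw[of x] nat_floor_divide_eq[OF h, of n x] that by (simp add: add.commute)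
  have pointwise: "(if x < real n * h then exp (-\<beta>*x) * f x else 0)
        + (if real n * h \<le> x \<and> x < real (Suc n) * h then w n * exp (-\<beta>*x) else 0)
      = (if x < real (Suc n) * h then exp (-\<beta>*x) * f x else 0)" if "x \<in> {0..}" for x
    using fx[of x] that h by (auto simp: not_less distrib_right)
  have sum: "((\<lambda>x. (if x < real n * h then exp (-\<beta>*x) * f x else 0)
        + (if real n * h \<le> x \<and> x < real (Suc n) * h then w n * exp (-\<beta>*x) else 0))
      has_integral (1 - z)/\<beta> * (\<Sum>k<Suc n. w k * z^k)) {0..}"
    using has_integral_add[OF Suc.IH[folded z_def] piece] unfolding sum_eq .
  show ?case unfolding z_def[symmetric] by (rule has_integral_eq[OF pointwise sum])
qed

lemma has_integral_step_laplace:
  fixes h \<beta> C R :: real and w :: "nat \<Rightarrow> real" and f :: "real \<Rightarrow> real"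
  assumes h: "h > 0" and \<beta>: "\<beta> > 0" and R: "1 \<le> R" "R < exp (\<beta>*h)"
    and wb: "\<And>k. \<bar>w k\<bar> \<le> C * R^k" and fw: "\<And>x. x \<ge> 0 \<Longrightarrow> f x = w (nat \<lfloor>x/h\<rfloor>)"
  shows "((\<lambda>x. exp (-\<beta>*x) * f x) has_integral
           (1 - exp (-\<beta>*h))/\<beta> * (\<Sum>k. w k * exp (-\<beta>*h)^k)) {0..}"
proof -
  define z where "z = exp (-\<beta>*h)"
  have "R * z < 1" using R(2) by (simp add: z_def exp_minus field_simps)
  then have summable: "summable (\<lambda>k. w k * z^k)"
    using summable_geometric_bound[OF wb] R by (simp add: z_def)
  define a where "a = \<beta> - ln R / h"
  have "ln R < \<beta> * h" using R ln_less_cancel_iff[of R "exp (\<beta>*h)"] by simp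
  then have a: "a > 0" using h by (simp add: a_def field_simps)
  define F where "F n x = (if x < real n * h then exp (-\<beta>*x) * f x else 0)" for n x
  have dominated: "norm (F n x) \<le> C * exp (-a*x)" if "x \<in> {0..}" for n x
  proof -
    have "exp (-\<beta>*x) * \<bar>f x\<bar> \<le> exp (-\<beta>*x) * (C * exp (ln R / h * x))"
      using step_exponential_bound[OF h R(1) wb, of x] fw[of x] that by simp
    also have "\<dots> = C * exp (-a*x)" by (simp add: a_def mult_exp_exp algebra_simps)
    finally show ?thesis
      using wb[of 0] by (auto simp: F_def abs_mult)
  qed
  have truncated: "(F n has_integral (1 - z)/\<beta> * (\<Sum>k<n. w k * z^k)) {0..}" for n
    unfolding F_def z_def using has_integral_step_truncated[of h \<beta> f w n] h \<beta> fw by simp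
  have integrable: "(\<lambda>x. C * exp (-a*x)) integrable_on {0..}"
    using integrable_on_cmult_left[OF integrable_on_exp_minus_to_infinity[OF a, of 0]] by simp
  have pointwise: "(\<lambda>n. F n x) \<longlonglongrightarrow> exp (-\<beta>*x) * f x" for x
  proof (rule tendsto_eventually)
    obtain N where "x/h < real N" using reals_Archimedean2 by blast
    then have "x < real N * h" using h by (simp add: field_simps)
    moreover have "real N * h \<le> real n * h" if "N \<le> n" for n
      using that h by (intro mult_right_mono) auto
    ultimately have "x < real n * h" if "N \<le> n" for n
      using that by (meson less_le_trans)
    then show "\<forall>\<^sub>F n in sequentially. F n x = exp (-\<beta>*x) * f x"
      unfolding F_def by (intro eventually_sequentiallyI[of N]) simp
  qed
  have partial_sums: "(\<lambda>n. (1 - z)/\<beta> * (\<Sum>k<n. w k * z^k)) \<longlonglongrightarrow> (1 - z)/\<beta> * (\<Sum>k. w k * z^k)"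
    by (intro tendsto_mult_left summable_LIMSEQ summable)
  show ?thesis
    unfolding z_def[symmetric]
    by (rule has_integral_dominated_convergence[OF truncated integrable _ _ partial_sums])
      (use dominated pointwise in auto)
qed

lemma powser_coeffs_eq_0:
  fixes d :: "nat \<Rightarrow> real"
  assumes r: "r > 0" and R: "R > 0" and db: "\<And>k. \<bar>d k\<bar> \<le> C * R^k"
    and vanish: "\<And>z. 0 < z \<Longrightarrow> z < r \<Longrightarrow> (\<Sum>k. d k * z^k) = 0"
  shows "d k = 0"
proof (induction k rule: less_induct)
  case (less k)
  define a where "a j = d (j + k)" for j
  define g where "g x = (\<Sum>j. a j * x^j)" for x :: real
  have summable_d: "summable (\<lambda>n. d n * x^n)" if "\<bar>x\<bar> < 1/R" for x
    by (rule summable_geometric_bound[OF db]) (use that R in \<open>auto simp: field_simps\<close>)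
  have sums_a: "(\<lambda>j. a j * x^j) sums g x" if "norm x < 1/R" for x
  proof (cases "x = 0")
    case True then show ?thesis by (simp add: g_def)
  next
    case False
    have "summable (\<lambda>n. d (n + k) * x^(n+k))"
      using summable_d[of x] that summable_iff_shift[of "\<lambda>n. d n * x^n" k] by simp
    then have "summable (\<lambda>n. (d (n + k) * x^(n+k)) / x^k)"
      by (rule summable_divide)
    then show ?thesis using False by (simp add: g_def a_def power_add summable_sums)
  qed
  have "(g \<longlongrightarrow> a 0) (at_right 0)"
    using powser_limit_0[of "1/R" a g] R sums_a by (simp add: filterlim_at_split)
  moreover have "\<forall>\<^sub>F x in at_right 0. x \<in> {0<..<min r (1/R)}"
    by (rule eventually_at_right_real) (use r R in simp)
  then have "\<forall>\<^sub>F x in at_right 0. g x = 0"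
  proof (rule eventually_mono)
    fix x assume x: "x \<in> {0<..<min r (1/R)}"
    have "(\<Sum>n. d n * x^n) = (\<Sum>i<k. d i * x^i) + (\<Sum>n. d (n + k) * x^(n+k))"
      using suminf_split_initial_segment[OF summable_d, of x k] x by simp
    also have "(\<Sum>i<k. d i * x^i) = 0" using less by simp
    also have "(\<Sum>n. d (n + k) * x^(n+k)) = (\<Sum>n. x^k * (a n * x^n))"
      by (simp add: a_def power_add mult_ac)
    also have "\<dots> = x^k * g x"
      unfolding g_def using sums_a[of x] x by (intro suminf_mult) (auto simp: sums_iff)
    finally show "g x = 0" using vanish[of x] x by simp
  qed
  then have "(g \<longlongrightarrow> 0) (at_right 0)" by (rule tendsto_eventually)
  ultimately have "a 0 = 0" using tendsto_unique[OF trivial_limit_at_right_real] by metis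
  then show ?case by (simp add: a_def)
qed


lemma pos_if_one_le_less_exp:
  fixes \<beta> h R :: real
  assumes "h > 0" "1 \<le> R" "R < exp (\<beta>*h)"
  shows "\<beta> > 0"
proof -
  have "0 < \<beta> * h" using assms(2,3) one_less_exp_iff[of "\<beta>*h"] by linarith
  then show ?thesis using assms(1) by (simp add: zero_less_mult_iff)
qed

section \<open>Uniqueness of the discretised scale function\<close>

lemma is_W_h_step_eq:
  assumes h: "h > 0" and f: "is_W_h s2 mu h q f" and x: "x \<ge> 0"
  shows "f x = f (real (nat \<lfloor>x/h\<rfloor>) * h)"
proof -
  have "x \<in> {real (nat \<lfloor>x/h\<rfloor>) * h..<(real (nat \<lfloor>x/h\<rfloor>) + 1) * h}"
    using nat_floor_divide_bounds[OF h x] by simp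
  then show ?thesis using f unfolding is_W_h_def by blast
qed

lemma is_W_h_grid_bound:
  assumes h: "h > 0" and f: "is_W_h s2 mu h q f"
  obtains C R where "1 \<le> R" "\<And>k. \<bar>f (real k * h)\<bar> \<le> C * R^k"
proof -
  obtain C c where Cc: "\<And>x. x \<ge> 0 \<Longrightarrow> \<bar>f x\<bar> \<le> C * exp (c * x)"
    using f unfolding is_W_h_def by blast
  have C: "C \<ge> 0" using Cc[of 0] by simp
  show ?thesis
  proof (rule that[of "exp (max c 0 * h)"])
    show "1 \<le> exp (max c 0 * h)" using h by simp
    fix k :: nat
    have "\<bar>f (real k * h)\<bar> \<le> C * exp (c * (real k * h))" using Cc[of "real k * h"] h by simp
    also have "\<dots> \<le> C * exp (max c 0 * (real k * h))"
      using C h by (intro mult_left_mono) (auto intro!: mult_right_mono)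
    also have "exp (max c 0 * (real k * h)) = exp (max c 0 * h)^k"
      by (simp add: exp_of_nat_mult[symmetric] mult_ac)
    finally show "\<bar>f (real k * h)\<bar> \<le> C * exp (max c 0 * h)^k" .
  qed
qed

lemma is_W_h_generating_function:
  assumes h: "h > 0" and f: "is_W_h s2 mu h q f"
    and R: "1 \<le> R" and fb: "\<And>k. \<bar>f (real k * h)\<bar> \<le> C * R^k"
    and \<beta>: "\<beta> > Phi_h s2 mu h q" "R < exp (\<beta>*h)"
  shows "(1 - exp (-\<beta>*h))/\<beta> * (\<Sum>k. f (real k * h) * exp (-\<beta>*h)^k)
           = (exp (\<beta>*h) - 1) / (\<beta> * h * (psi_h s2 mu h \<beta> - q))"
proof (rule has_integral_unique)
  show "((\<lambda>x. exp (-\<beta>*x) * f x) has_integral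
          (1 - exp (-\<beta>*h))/\<beta> * (\<Sum>k. f (real k * h) * exp (-\<beta>*h)^k)) {0..}"
    using pos_if_one_le_less_exp[OF h R \<beta>(2)] is_W_h_step_eq[OF h f]
    by (intro has_integral_step_laplace[OF h _ R \<beta>(2) fb]) auto
  show "((\<lambda>x. exp (-\<beta>*x) * f x) has_integral
          (exp (\<beta>*h) - 1) / (\<beta> * h * (psi_h s2 mu h \<beta> - q))) {0..}"
    using f \<beta>(1) unfolding is_W_h_def by auto
qed

text \<open>The generating functions of the grid values of two solutions coincide near 0.\<close>
lemma is_W_h_grid_eq:
  assumes h: "h > 0" and f: "is_W_h s2 mu h q f" and g: "is_W_h s2 mu h q g" and R: "1 \<le> R"
    and fb: "\<And>k. \<bar>f (real k * h)\<bar> \<le> Cf * R^k" and gb: "\<And>k. \<bar>g (real k * h)\<bar> \<le> Cg * R^k"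
  shows "f (real k * h) = g (real k * h)"
proof -
  define d where "d k = f (real k * h) - g (real k * h)" for k
  define \<beta>0 where "\<beta>0 = max (Phi_h s2 mu h q) (ln R / h) + 1"
  have "d k = 0"
  proof (rule powser_coeffs_eq_0[of "exp (-\<beta>0*h)" R _ "Cf + Cg"])
    show "\<bar>d k\<bar> \<le> (Cf + Cg) * R^k" for k
      using fb[of k] gb[of k] unfolding d_def by (simp add: algebra_simps)
    fix z :: real assume z: "0 < z" "z < exp (-\<beta>0*h)"
    define \<beta> where "\<beta> = - ln z / h"
    have ez: "exp (-\<beta>*h) = z" using h z by (simp add: \<beta>_def)
    have "ln z < -\<beta>0*h" using z ln_less_cancel_iff[of z "exp (-\<beta>0*h)"] by simp
    then have "\<beta> > \<beta>0" using h by (simp add: \<beta>_def field_simps)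
    then have \<beta>: "\<beta> > Phi_h s2 mu h q" "ln R / h < \<beta>" by (auto simp: \<beta>0_def)
    then have "ln R < \<beta> * h" using h by (simp add: pos_divide_less_eq)
    moreover have "0 < R" using R by simp
    ultimately have R\<beta>: "R < exp (\<beta>*h)" using exp_less_cancel_iff[of "ln R" "\<beta>*h"] by simp
    have "\<beta> > 0" using pos_if_one_le_less_exp[OF h R R\<beta>] .
    moreover have "z < 1" unfolding ez[symmetric] using \<open>\<beta> > 0\<close> h by simp
    ultimately have "(1 - z)/\<beta> \<noteq> 0" by simp
    moreover have "(1 - z)/\<beta> * (\<Sum>k. f (real k * h) * z^k) = (1 - z)/\<beta> * (\<Sum>k. g (real k * h) * z^k)"
      using is_W_h_generating_function[OF h f R fb \<beta>(1) R\<beta>]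
        is_W_h_generating_function[OF h g R gb \<beta>(1) R\<beta>] unfolding ez by (rule trans[OF _ sym])
    ultimately have "(\<Sum>k. f (real k * h) * z^k) = (\<Sum>k. g (real k * h) * z^k)" by simp
    moreover have "R * \<bar>z\<bar> < exp (\<beta>*h) * z" using R\<beta> z by simp
    then have "R * \<bar>z\<bar> < 1" unfolding ez[symmetric] by (simp add: exp_minus field_simps)
    then have "summable (\<lambda>k. f (real k * h) * z^k)" "summable (\<lambda>k. g (real k * h) * z^k)"
      using R by (auto intro: summable_geometric_bound[OF fb] summable_geometric_bound[OF gb])
    ultimately show "(\<Sum>k. d k * z^k) = 0"
      unfolding d_def left_diff_distrib by (simp add: suminf_diff[symmetric])
  qed (use R in auto)
  then show ?thesis by (simp add: d_def)
qed

lemma is_W_h_unique: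
  assumes h: "h > 0" and f: "is_W_h s2 mu h q f" and g: "is_W_h s2 mu h q g"
  shows "f = g"
proof
  obtain Cf Rf where Rf: "1 \<le> Rf" "\<And>k. \<bar>f (real k * h)\<bar> \<le> Cf * Rf^k"
    using is_W_h_grid_bound[OF h f] by blast
  obtain Cg Rg where Rg: "1 \<le> Rg" "\<And>k. \<bar>g (real k * h)\<bar> \<le> Cg * Rg^k"
    using is_W_h_grid_bound[OF h g] by blast
  define R where "R = max Rf Rg"
  have R: "1 \<le> R" using Rf by (simp add: R_def)
  have "\<bar>f (real k * h)\<bar> \<le> Cf * R^k" "\<bar>g (real k * h)\<bar> \<le> Cg * R^k" for k
  proof -
    have "Rf^k \<le> R^k" "Rg^k \<le> R^k" using Rf Rg by (auto simp: R_def intro!: power_mono)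
    moreover have "Cf \<ge> 0" "Cg \<ge> 0" using Rf(2)[of 0] Rg(2)[of 0] by auto
    ultimately show "\<bar>f (real k * h)\<bar> \<le> Cf * R^k" "\<bar>g (real k * h)\<bar> \<le> Cg * R^k"
      using Rf(2)[of k] Rg(2)[of k] by (meson mult_left_mono order_trans)+
  qed
  note grid_eq = is_W_h_grid_eq[OF h f g R this]
  fix x show "f x = g x"
  proof (cases "x < 0")
    case True then show ?thesis using f g unfolding is_W_h_def by simp
  next
    case False
    then show ?thesis using is_W_h_step_eq[OF h f, of x] is_W_h_step_eq[OF h g, of x] grid_eq by simp
  qed
qed

lemma W_h_eqI:
  assumes "h > 0" "is_W_h s2 mu h q f"
  shows "W_h s2 mu h q = f"
  unfolding W_h_def using assms is_W_h_unique by blast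

definition step_fun :: "real \<Rightarrow> (nat \<Rightarrow> real) \<Rightarrow> real \<Rightarrow> real" where
  "step_fun h w x = (if x < 0 then 0 else w (nat \<lfloor>x/h\<rfloor>))"

lemma step_fun_grid:
  assumes h: "h > 0"
  shows "step_fun h w (real k * h) = w k"
proof -
  have "\<not> real k * h < 0" using h by (simp add: not_less)
  then show ?thesis using h by (simp add: step_fun_def)
qed

lemma continuous_at_right_step_fun:
  assumes h: "h > 0" and x: "x \<ge> 0"
  shows "continuous (at_right x) (step_fun h w)"
proof -
  define k where "k = nat \<lfloor>x/h\<rfloor>"
  have k: "real k * h \<le> x" "x < (real k + 1) * h" using nat_floor_divide_bounds[OF h x] by (simp_all add: k_def)
  have "\<forall>\<^sub>F y in at_right x. y \<in> {x<..<(real k + 1) * h}"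
    by (rule eventually_at_right_real) (use k in simp)
  then have "\<forall>\<^sub>F y in at_right x. step_fun h w y = step_fun h w x"
  proof (rule eventually_mono)
    fix y assume y: "y \<in> {x<..<(real k + 1) * h}"
    then have "nat \<lfloor>y/h\<rfloor> = k" using k by (intro nat_floor_divide_eq h) auto
    then show "step_fun h w y = step_fun h w x" using y x by (simp add: step_fun_def k_def)
  qed
  then show ?thesis
    unfolding continuous_within by (rule tendsto_eventually[THEN tendsto_cong[THEN iffD1, rotated]])
      (auto elim: eventually_mono)
qed

lemma is_W_h_step_fun:
  fixes w :: "nat \<Rightarrow> real"
  assumes h: "h > 0"
    and growth: "\<And>\<beta>. \<beta> > Phi_h s2 mu h q \<Longrightarrow> \<exists>C R. 1 \<le> R \<and> R < exp (\<beta>*h) \<and> (\<forall>k. \<bar>w k\<bar> \<le> C * R^k)"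
    and transform: "\<And>\<beta>. \<beta> > Phi_h s2 mu h q \<Longrightarrow>
      (1 - exp (-\<beta>*h))/\<beta> * (\<Sum>k. w k * exp (-\<beta>*h)^k) = (exp (\<beta>*h) - 1) / (\<beta> * h * (psi_h s2 mu h \<beta> - q))"
  shows "is_W_h s2 mu h q (step_fun h w)"
  unfolding is_W_h_def
proof (intro conjI allI impI ballI)
  show "step_fun h w x = 0" if "x < 0" for x using that by (simp add: step_fun_def)
next
  show "continuous (at_right x) (step_fun h w)" if "x \<ge> 0" for x
    using continuous_at_right_step_fun[OF h that] .
next
  fix k :: nat and x assume x: "x \<in> {real k * h..<(real k + 1) * h}"
  then have "nat \<lfloor>x/h\<rfloor> = k" by (intro nat_floor_divide_eq h) auto
  moreover have "x \<ge> 0" using x h by (auto intro: order_trans[rotated])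
  ultimately show "step_fun h w x = step_fun h w (real k * h)"
    using step_fun_grid[OF h] by (simp add: step_fun_def)
next
  obtain C R where R: "1 \<le> R" "\<And>k. \<bar>w k\<bar> \<le> C * R^k"
    using growth[of "Phi_h s2 mu h q + 1"] by auto
  show "\<exists>C c. \<forall>x\<ge>0. \<bar>step_fun h w x\<bar> \<le> C * exp (c * x)"
  proof (intro exI allI impI)
    fix x :: real assume "x \<ge> 0"
    then show "\<bar>step_fun h w x\<bar> \<le> C * exp (ln R / h * x)"
      using step_exponential_bound[OF h R] by (simp add: step_fun_def)
  qed
next
  fix \<beta> assume \<beta>: "\<beta> > Phi_h s2 mu h q"
  obtain C R where R: "1 \<le> R" "R < exp (\<beta>*h)" "\<And>k. \<bar>w k\<bar> \<le> C * R^k"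
    using growth[OF \<beta>] by auto
  have "((\<lambda>x. exp (-\<beta>*x) * step_fun h w x) has_integral
          (1 - exp (-\<beta>*h))/\<beta> * (\<Sum>k. w k * exp (-\<beta>*h)^k)) {0..}"
    using pos_if_one_le_less_exp[OF h R(1,2)]
    by (intro has_integral_step_laplace[OF h _ R]) (auto simp: step_fun_def)
  then show "((\<lambda>x. exp (- \<beta> * x) * step_fun h w x) has_integral
           ((exp (\<beta> * h) - 1) / (\<beta> * h * (psi_h s2 mu h \<beta> - q)))) {0..}"
    using transform[OF \<beta>] by simp
qed

section \<open>The discretised scale function in closed form\<close>

lemma psi_h_minus_eq:
  assumes h: "h \<noteq> 0"
  shows "psi_h s2 mu h \<beta> - q =
    ((s2 + mu*h) * exp (\<beta>*h)^2 - 2*(s2 + q*h^2) * exp (\<beta>*h) + (s2 - mu*h)) / (2*h^2*exp (\<beta>*h))"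
proof -
  have "exp (-\<beta>*h) = 1 / exp (\<beta>*h)" by (simp add: exp_minus field_simps)
  then show ?thesis unfolding psi_h_def using h by (simp add: field_simps power2_eq_square)
qed

definition disc_sqrt :: "real \<Rightarrow> real \<Rightarrow> real \<Rightarrow> real \<Rightarrow> real" where
  "disc_sqrt s2 mu q h = sqrt (mu^2 + 2 * q * s2 + q^2*h^2)"

text \<open>The two roots in \<open>E = exp (\<beta>*h)\<close> of \<open>psi_h s2 mu h \<beta> = q\<close>, the discrete counterparts
  of \<open>exp (alpha_plus s2 mu q * h)\<close> and \<open>exp (alpha_minus s2 mu q * h)\<close>.\<close>
definition root_plus :: "real \<Rightarrow> real \<Rightarrow> real \<Rightarrow> real \<Rightarrow> real" where
  "root_plus s2 mu q h = (s2 + q*h^2 + h * disc_sqrt s2 mu q h) / (s2 + mu*h)"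

definition root_minus :: "real \<Rightarrow> real \<Rightarrow> real \<Rightarrow> real \<Rightarrow> real" where
  "root_minus s2 mu q h = (s2 + q*h^2 - h * disc_sqrt s2 mu q h) / (s2 + mu*h)"

definition W_h_grid :: "real \<Rightarrow> real \<Rightarrow> real \<Rightarrow> real \<Rightarrow> nat \<Rightarrow> real" where
  "W_h_grid s2 mu q h k =
     (root_plus s2 mu q h ^ (k+1) - root_minus s2 mu q h ^ (k+1)) / disc_sqrt s2 mu q h"

lemma geometric_difference_transform:
  fixes E rp rm D S h \<beta> :: real
  assumes r: "0 < rm" "rm < rp" "rp < E" and pos: "D > 0" "S > 0" "h > 0" "\<beta> > 0"
    and diff: "rp - rm = 2*h*S/D"
  shows "(1 - 1/E)/\<beta> * ((rp/(1 - rp/E) - rm/(1 - rm/E))/S) = (E - 1)/(\<beta>*h*(D*(E-rp)*(E-rm)/(2*h^2*E)))"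
proof -
  define u v where "u = E - rp" and "v = E - rm"
  have ne: "u \<noteq> 0" "v \<noteq> 0" "E > 0" using r by (auto simp: u_def v_def)
  have "rp/(1 - rp/E) - rm/(1 - rm/E) = E^2*(rp - rm)/(u * v)"
    using ne by (simp add: u_def v_def field_simps power2_eq_square)
  then have "rp/(1 - rp/E) - rm/(1 - rm/E) = E^2*(2*h*S/D)/(u * v)" unfolding diff .
  moreover have "(1 - 1/E)/\<beta> * ((E^2*(2*h*S/D)/(u * v))/S) = (E - 1)/(\<beta>*h*(D * u * v/(2*h^2*E)))"
    using ne pos by (simp add: field_simps power2_eq_square)
  ultimately show ?thesis by (simp add: u_def v_def)
qed

locale bm_drift =
  fixes s2 mu q :: real
  assumes s2_pos: "s2 > 0" and q_nonneg: "q \<ge> 0" and nondegenerate: "max q \<bar>mu\<bar> > 0"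
begin

lemma discriminant_pos: "mu^2 + 2 * q * s2 > 0"
proof (cases "q > 0")
  case True then show ?thesis using s2_pos by (simp add: add_nonneg_pos)
next
  case False then have "mu \<noteq> 0" using nondegenerate q_nonneg by auto
  then show ?thesis using q_nonneg s2_pos by (simp add: add_pos_nonneg)
qed

lemma drift_bounds:
  assumes h: "h > 0" "h * \<bar>mu\<bar> < s2"
  shows "s2 + mu*h > 0" "s2 - mu*h > 0"
proof -
  have "\<bar>mu*h\<bar> < s2" using h by (simp add: abs_mult mult.commute)
  then show "s2 + mu*h > 0" "s2 - mu*h > 0" by linarith+
qed

lemma disc_sqrt_pos: "disc_sqrt s2 mu q h > 0"
  unfolding disc_sqrt_def using discriminant_pos by (simp add: add_pos_nonneg)

lemma disc_sqrt_squared: "disc_sqrt s2 mu q h ^ 2 = mu^2 + 2 * q * s2 + q^2*h^2"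
  unfolding disc_sqrt_def using discriminant_pos by (simp add: add_pos_nonneg)

lemma char_poly_factor:
  assumes h: "h > 0" "h * \<bar>mu\<bar> < s2"
  shows "(s2 + mu*h) * E^2 - 2*(s2 + q*h^2) * E + (s2 - mu*h)
           = (s2 + mu*h) * (E - root_plus s2 mu q h) * (E - root_minus s2 mu q h)"
proof -
  define D where "D = s2 + mu*h"
  define a where "a = s2 + q*h^2"
  define t where "t = h * disc_sqrt s2 mu q h"
  have D: "D > 0" using drift_bounds[OF h] by (simp add: D_def)
  have "a^2 - t^2 = D * (s2 - mu*h)"
    unfolding a_def t_def D_def power_mult_distrib disc_sqrt_squared
    by (simp add: algebra_simps power2_eq_square)
  moreover have "D * (E - (a + t)/D) * (E - (a - t)/D) = D*E^2 - 2*a*E + (a^2 - t^2)/D"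
    using D by (simp add: field_simps power2_eq_square)
  ultimately have "D * (E - (a + t)/D) * (E - (a - t)/D) = D*E^2 - 2*a*E + (s2 - mu*h)"
    using D by simp
  then show ?thesis
    by (simp add: root_plus_def root_minus_def D_def a_def t_def algebra_simps)
qed

lemma psi_h_minus_factor:
  assumes h: "h > 0" "h * \<bar>mu\<bar> < s2"
  shows "psi_h s2 mu h \<beta> - q =
    (s2 + mu*h) * (exp (\<beta>*h) - root_plus s2 mu q h) * (exp (\<beta>*h) - root_minus s2 mu q h)
      / (2*h^2*exp (\<beta>*h))"
proof -
  have h0: "h \<noteq> 0" using h by simp
  show ?thesis unfolding psi_h_minus_eq[OF h0] char_poly_factor[OF h] ..
qed

lemma roots_bounds:
  assumes h: "h > 0" "h * \<bar>mu\<bar> < s2"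
  shows "0 < root_minus s2 mu q h" "root_minus s2 mu q h < root_plus s2 mu q h"
    "1 \<le> root_plus s2 mu q h"
proof -
  define S where "S = disc_sqrt s2 mu q h"
  have S: "S > 0" "S^2 = mu^2 + 2 * q * s2 + q^2*h^2"
    using disc_sqrt_pos disc_sqrt_squared by (auto simp: S_def)
  note D = drift_bounds[OF h]
  have "(s2 + q*h^2)^2 - (h*S)^2 = (s2 + mu*h) * (s2 - mu*h)"
    unfolding power_mult_distrib S(2) by algebra
  then have "(h*S)^2 < (s2 + q*h^2)^2" using mult_pos_pos[OF D] by linarith
  moreover have "0 \<le> s2 + q*h^2" using q_nonneg s2_pos by simp
  ultimately have "h*S < s2 + q*h^2" by (rule power_less_imp_less_base)
  then show "0 < root_minus s2 mu q h"
    using D by (simp add: root_minus_def S_def[symmetric])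
  show "root_minus s2 mu q h < root_plus s2 mu q h"
    using D h S by (simp add: root_minus_def root_plus_def S_def[symmetric] divide_strict_right_mono)
  have "\<bar>mu\<bar> \<le> S" unfolding S_def disc_sqrt_def
    using real_sqrt_le_mono[of "mu^2" "mu^2 + 2 * q * s2 + q^2*h^2"] q_nonneg s2_pos by simp
  then have "mu * h \<le> h * S" using h by (simp add: mult.commute)
  moreover have "q * h^2 \<ge> 0" using q_nonneg by simp
  ultimately show "1 \<le> root_plus s2 mu q h"
    using D by (simp add: root_plus_def S_def[symmetric] field_simps)
qed

lemma psi_h_eq_iff:
  assumes h: "h > 0" "h * \<bar>mu\<bar> < s2"
  shows "psi_h s2 mu h \<beta> = q \<longleftrightarrow> exp (\<beta>*h) = root_plus s2 mu q h \<or> exp (\<beta>*h) = root_minus s2 mu q h"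
proof -
  have "psi_h s2 mu h \<beta> = q \<longleftrightarrow> psi_h s2 mu h \<beta> - q = 0" by simp
  also have "\<dots> \<longleftrightarrow> (exp (\<beta>*h) - root_plus s2 mu q h) * (exp (\<beta>*h) - root_minus s2 mu q h) = 0"
    unfolding psi_h_minus_factor[OF h] using drift_bounds[OF h] h(1) by simp
  finally show ?thesis by simp
qed

lemma psi_h_ln_roots:
  assumes h: "h > 0" "h * \<bar>mu\<bar> < s2"
  shows "psi_h s2 mu h (ln (root_plus s2 mu q h) / h) = q"
    "psi_h s2 mu h (ln (root_minus s2 mu q h) / h) = q"
proof -
  have "exp (ln (root_plus s2 mu q h) / h * h) = root_plus s2 mu q h"
    "exp (ln (root_minus s2 mu q h) / h * h) = root_minus s2 mu q h"
    using roots_bounds[OF h] h(1) by simp_all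
  then show "psi_h s2 mu h (ln (root_plus s2 mu q h) / h) = q"
    "psi_h s2 mu h (ln (root_minus s2 mu q h) / h) = q"
    unfolding psi_h_eq_iff[OF h] by simp_all
qed

lemma Phi_h_eq:
  assumes h: "h > 0" "h * \<bar>mu\<bar> < s2"
  shows "Phi_h s2 mu h q = ln (root_plus s2 mu q h) / h"
  unfolding Phi_h_def
proof (rule Greatest_equality)
  show "0 \<le> ln (root_plus s2 mu q h) / h \<and> psi_h s2 mu h (ln (root_plus s2 mu q h) / h) = q"
    using psi_h_ln_roots[OF h] roots_bounds[OF h] h(1) by simp
next
  fix y assume "0 \<le> y \<and> psi_h s2 mu h y = q"
  then have "exp (y*h) = root_plus s2 mu q h \<or> exp (y*h) = root_minus s2 mu q h"
    unfolding psi_h_eq_iff[OF h] by simp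
  then have "exp (y*h) \<le> root_plus s2 mu q h" using roots_bounds[OF h] by linarith
  moreover have "0 < root_plus s2 mu q h" using roots_bounds[OF h] by linarith
  ultimately have "y*h \<le> ln (root_plus s2 mu q h)" by (simp add: ln_ge_iff)
  then show "y \<le> ln (root_plus s2 mu q h) / h" using h(1) by (simp add: field_simps)
qed

lemma W_h_grid_bound:
  assumes h: "h > 0" "h * \<bar>mu\<bar> < s2"
  shows "\<bar>W_h_grid s2 mu q h k\<bar> \<le> (2 * root_plus s2 mu q h / disc_sqrt s2 mu q h) * root_plus s2 mu q h ^ k"
proof -
  note r = roots_bounds[OF h]
  have "root_minus s2 mu q h ^ (k+1) \<le> root_plus s2 mu q h ^ (k+1)"
    using r by (intro power_mono) auto
  moreover have "0 < root_minus s2 mu q h ^ (k+1)" using r by simp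
  ultimately show ?thesis
    using disc_sqrt_pos[of h] by (simp add: W_h_grid_def field_simps)
qed

lemma W_h_grid_transform:
  assumes h: "h > 0" "h * \<bar>mu\<bar> < s2" and \<beta>: "\<beta> > 0" "root_plus s2 mu q h < exp (\<beta>*h)"
  shows "(1 - exp (-\<beta>*h))/\<beta> * (\<Sum>k. W_h_grid s2 mu q h k * exp (-\<beta>*h)^k)
           = (exp (\<beta>*h) - 1) / (\<beta> * h * (psi_h s2 mu h \<beta> - q))"
proof -
  define E where "E = exp (\<beta>*h)"
  define rp where "rp = root_plus s2 mu q h"
  define rm where "rm = root_minus s2 mu q h"
  define S where "S = disc_sqrt s2 mu q h"
  define D where "D = s2 + mu*h"
  have r: "0 < rm" "rm < rp" "rp < E" using roots_bounds[OF h] \<beta>(2) by (simp_all add: rp_def rm_def E_def)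
  have S: "S > 0" using disc_sqrt_pos by (simp add: S_def)
  have D: "D > 0" using drift_bounds[OF h] by (simp add: D_def)
  have E: "exp (-\<beta>*h) = 1/E" by (simp add: E_def exp_minus field_simps)
  have geometric: "(\<lambda>k. r^(k+1) * (1/E)^k) sums (r / (1 - r/E))" if "0 < r" "r < E" for r
  proof -
    have "(\<lambda>k. (r/E)^k) sums (1/(1 - r/E))" using that by (intro geometric_sums) simp
    from sums_mult[OF this, of r] show ?thesis by (simp add: power_divide field_simps)
  qed
  have "(\<lambda>k. W_h_grid s2 mu q h k * (1/E)^k) sums ((rp / (1 - rp/E) - rm / (1 - rm/E)) / S)"
    using sums_divide[OF sums_diff[OF geometric[of rp] geometric[of rm]], of S] r
    unfolding W_h_grid_def rp_def[symmetric] rm_def[symmetric] S_def[symmetric]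
    by (simp add: algebra_simps diff_divide_distrib)
  then have sum_eq: "(\<Sum>k. W_h_grid s2 mu q h k * (1/E)^k) = (rp / (1 - rp/E) - rm / (1 - rm/E)) / S"
    by (rule sums_unique[symmetric])
  have diff: "rp - rm = 2*h*S/D"
    unfolding rp_def rm_def root_plus_def root_minus_def S_def D_def
    using D by (simp add: D_def diff_divide_distrib[symmetric])
  have psi_eq: "psi_h s2 mu h \<beta> - q = D * (E - rp) * (E - rm) / (2*h^2*E)"
    unfolding psi_h_minus_factor[OF h] E_def rp_def rm_def D_def ..
  show ?thesis
    unfolding E sum_eq psi_eq E_def[symmetric] by (rule geometric_difference_transform[OF r D S h(1) \<beta>(1) diff])
qed

lemma is_W_h_grid:
  assumes h: "h > 0" "h * \<bar>mu\<bar> < s2"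
  shows "is_W_h s2 mu h q (step_fun h (W_h_grid s2 mu q h))"
proof (rule is_W_h_step_fun[OF h(1)])
  fix \<beta> assume "\<beta> > Phi_h s2 mu h q"
  then have "ln (root_plus s2 mu q h) < \<beta> * h"
    using h(1) unfolding Phi_h_eq[OF h] by (simp add: pos_divide_less_eq)
  moreover have "0 < root_plus s2 mu q h" using roots_bounds[OF h] by linarith
  ultimately have \<beta>: "root_plus s2 mu q h < exp (\<beta>*h)"
    using exp_less_cancel_iff[of "ln (root_plus s2 mu q h)" "\<beta>*h"] by simp
  show "\<exists>C R. 1 \<le> R \<and> R < exp (\<beta>*h) \<and> (\<forall>k. \<bar>W_h_grid s2 mu q h k\<bar> \<le> C * R^k)"
    using W_h_grid_bound[OF h] roots_bounds(3)[OF h] \<beta> by (intro exI conjI allI)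
  show "(1 - exp (-\<beta>*h))/\<beta> * (\<Sum>k. W_h_grid s2 mu q h k * exp (-\<beta>*h)^k)
          = (exp (\<beta>*h) - 1) / (\<beta> * h * (psi_h s2 mu h \<beta> - q))"
    by (rule W_h_grid_transform[OF h pos_if_one_le_less_exp[OF h(1) roots_bounds(3)[OF h] \<beta>] \<beta>])
qed

lemma W_h_eq_grid:
  assumes "h > 0" "h * \<bar>mu\<bar> < s2"
  shows "W_h s2 mu h q = step_fun h (W_h_grid s2 mu q h)"
  by (rule W_h_eqI[OF assms(1) is_W_h_grid[OF assms]])

end

definition W_h_grid_zero :: "real \<Rightarrow> real \<Rightarrow> nat \<Rightarrow> real" where
  "W_h_grid_zero s2 h k = 2 * (real k + 1) * h / s2"

lemma psi_h_zero_drift: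
  assumes "h \<noteq> 0"
  shows "psi_h s2 0 h \<beta> = s2 * (exp (\<beta>*h) - 1)^2 / (2*h^2*exp (\<beta>*h))"
  using psi_h_minus_eq[OF assms, of s2 0 \<beta> 0] by (simp add: power2_eq_square algebra_simps)

lemma Phi_h_zero_drift:
  assumes s2: "s2 > 0" and h: "h > 0"
  shows "Phi_h s2 0 h 0 = 0"
  unfolding Phi_h_def
proof (rule Greatest_equality)
  show "0 \<le> (0::real) \<and> psi_h s2 0 h 0 = 0" by (simp add: psi_h_def)
next
  fix y assume "0 \<le> y \<and> psi_h s2 0 h y = 0"
  then have "exp (y*h) = 1" using psi_h_zero_drift[of h s2 y] s2 h by simp
  then show "y \<le> 0" using h by simp
qed

lemma linear_le_geometric:
  fixes R :: real
  assumes "R > 1"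
  shows "real k + 1 \<le> R / (R - 1) * R^k"
proof -
  have "1 + real (Suc k) * (R - 1) \<le> R^Suc k"
    using Bernoulli_inequality[of "R - 1" "Suc k"] assms by simp
  then have "(real k + 1) * (R - 1) \<le> R * R^k" by (simp add: algebra_simps)
  then show ?thesis using assms by (simp add: pos_le_divide_eq)
qed

lemma W_h_grid_zero_transform:
  assumes s2: "s2 > 0" and h: "h > 0" and \<beta>: "\<beta> > 0"
  shows "(1 - exp (-\<beta>*h))/\<beta> * (\<Sum>k. W_h_grid_zero s2 h k * exp (-\<beta>*h)^k)
           = (exp (\<beta>*h) - 1) / (\<beta> * h * (psi_h s2 0 h \<beta> - 0))"
proof -
  define E where "E = exp (\<beta>*h)"
  have E: "E > 1" using \<beta> h by (simp add: E_def)
  have "(\<lambda>k. 2*h/s2 * (of_nat (Suc k) * (1/E)^k)) sums (2*h/s2 * (1/(1 - 1/E)^2))"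
    using E by (intro sums_mult geometric_deriv_sums) simp
  moreover have "W_h_grid_zero s2 h k * (1/E)^k = 2*h/s2 * (of_nat (Suc k) * (1/E)^k)" for k
    by (simp add: W_h_grid_zero_def)
  ultimately have "(\<Sum>k. W_h_grid_zero s2 h k * (1/E)^k) = 2*h/s2 * (1/(1 - 1/E)^2)"
    by (simp add: sums_iff)
  also have "\<dots> = 2*h*E^2 / (s2 * (E - 1)^2)"
    using E by (simp add: field_simps)
  finally have sum_eq: "(\<Sum>k. W_h_grid_zero s2 h k * (1/E)^k) = 2*h*E^2 / (s2 * (E - 1)^2)" .
  have psi_eq: "psi_h s2 0 h \<beta> - 0 = s2 * (E - 1)^2 / (2*h^2*E)"
    using psi_h_zero_drift[of h s2 \<beta>] h by (simp add: E_def)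
  have ez: "exp (-\<beta>*h) = 1/E" by (simp add: E_def exp_minus field_simps)
  define u where "u = E - 1"
  have u: "u \<noteq> 0" "1 - 1/E = u/E" using E by (auto simp: u_def field_simps)
  have "u/E/\<beta> * (2*h*E^2 / (s2 * u^2)) = u / (\<beta> * h * (s2 * u^2 / (2*h^2*E)))"
    using u(1) E \<beta> h s2 by (simp add: field_simps power2_eq_square)
  then show ?thesis
    unfolding ez sum_eq psi_eq E_def[symmetric] u(2) by (simp add: u_def)
qed

lemma is_W_h_grid_zero:
  assumes s2: "s2 > 0" and h: "h > 0"
  shows "is_W_h s2 0 h 0 (step_fun h (W_h_grid_zero s2 h))"
proof (rule is_W_h_step_fun[OF h])
  fix \<beta> assume "\<beta> > Phi_h s2 0 h 0"
  then have \<beta>: "\<beta> > 0" using Phi_h_zero_drift[OF s2 h] by simp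
  define R where "R = exp (\<beta>*h/2)"
  have R: "1 < R" "R < exp (\<beta>*h)" using \<beta> h by (simp_all add: R_def)
  have "\<bar>W_h_grid_zero s2 h k\<bar> \<le> (2*h/s2 * (R / (R - 1))) * R^k" for k
    using mult_left_mono[OF linear_le_geometric[OF R(1), of k], of "2*h/s2"] s2 h
    by (simp add: W_h_grid_zero_def mult_ac)
  with R show "\<exists>C R. 1 \<le> R \<and> R < exp (\<beta>*h) \<and> (\<forall>k. \<bar>W_h_grid_zero s2 h k\<bar> \<le> C * R^k)"
    by (intro exI[of _ "2*h/s2 * (R / (R - 1))"] exI[of _ R] conjI allI) auto
  show "(1 - exp (-\<beta>*h))/\<beta> * (\<Sum>k. W_h_grid_zero s2 h k * exp (-\<beta>*h)^k)
      = (exp (\<beta>*h) - 1) / (\<beta> * h * (psi_h s2 0 h \<beta> - 0))"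
    by (rule W_h_grid_zero_transform[OF s2 h \<beta>])
qed

lemma Zpp_obtain_nat:
  assumes h: "h > 0" and x: "x \<in> Zpp h"
  obtains k :: nat where "k \<ge> 1" "x = real k * h"
proof -
  obtain j :: int where j: "x = real_of_int j * h" "x > 0" using x unfolding Zpp_def by auto
  then have "j > 0" using h by (simp add: zero_less_mult_iff)
  then show ?thesis using that[of "nat j"] j by simp
qed

lemma step_fun_prev:
  assumes h: "h > 0" and k: "k \<ge> 1"
  shows "step_fun h w (real k * h - h) = w (k - 1)"
proof -
  have "real k * h - h = real (k - 1) * h" using k by (simp add: of_nat_diff algebra_simps)
  then show ?thesis using step_fun_grid[OF h] by simp
qed

lemma Delta_W_zero_drift:
  assumes s2: "s2 > 0" and h: "h > 0" and x: "x \<in> Zpp h"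
  shows "Delta_W s2 0 0 x h = 0"
proof -
  obtain k :: nat where k: "k \<ge> 1" "x = real k * h" using Zpp_obtain_nat[OF h x] .
  have "W_h s2 0 h 0 (x - h) = W_h_grid_zero s2 h (k - 1)"
    using W_h_eqI[OF h is_W_h_grid_zero[OF s2 h]] step_fun_prev[OF h k(1)] k(2) by simp
  also have "\<dots> = 2 * x / s2" using k by (simp add: W_h_grid_zero_def of_nat_diff algebra_simps)
  moreover have "0 \<le> x" using k h by simp
  ultimately show ?thesis unfolding Delta_W_def W_def by (simp add: not_less)
qed

context bm_drift
begin

lemma Delta_W_grid:
  assumes h: "h > 0" "h * \<bar>mu\<bar> < s2" and k: "k \<ge> 1"
  shows "Delta_W s2 mu q (real k * h) h
    = W s2 mu q (real k * h) - (root_plus s2 mu q h ^ k - root_minus s2 mu q h ^ k) / disc_sqrt s2 mu q h"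
proof -
  obtain j where "k = Suc j" using k by (cases k) auto
  then show ?thesis
    using W_h_eq_grid[OF h] step_fun_prev[OF h(1) k] unfolding Delta_W_def W_h_grid_def by simp
qed

end

section \<open>Roots of the discretised Laplace exponent for small \<open>h\<close>\<close>

lemma isCont_if_zero:
  fixes f :: "real \<Rightarrow> real"
  assumes "(f \<longlongrightarrow> c) (at 0)"
  shows "isCont (\<lambda>y. if y = 0 then c else f y) 0"
proof -
  have "\<forall>\<^sub>F y in at 0. f y = (if y = 0 then c else f y)" by (simp add: eventually_at_filter)
  then show ?thesis using assms unfolding isCont_def by (simp add: tendsto_cong)
qed

definition sinh_rem :: "real \<Rightarrow> real" where
  "sinh_rem = (\<lambda>y. if y = 0 then 1/3 else (exp y - exp (-y) - 2*y) / y^3)"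

definition cosh_rem :: "real \<Rightarrow> real" where
  "cosh_rem = (\<lambda>y. if y = 0 then 1/12 else (exp y + exp (-y) - 2 - y^2) / y^4)"

definition exp_quot :: "real \<Rightarrow> real" where
  "exp_quot = (\<lambda>t. if t = 0 then 1 else (exp t - 1) / t)"

lemma exp_minus_exp_neg_eq: "exp y - exp (-y) = 2*y + y^3 * sinh_rem y"
  by (simp add: sinh_rem_def)

lemma exp_plus_exp_neg_eq: "exp y + exp (-y) - 2 = y^2 + y^4 * cosh_rem y"
  by (simp add: cosh_rem_def)

lemma exp_minus_one_eq: "exp t - 1 = t * exp_quot t"
  by (simp add: exp_quot_def)

lemma isCont_sinh_rem: "isCont sinh_rem 0"
  unfolding sinh_rem_def by (rule isCont_if_zero) real_asymp

lemma isCont_cosh_rem: "isCont cosh_rem 0"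
  unfolding cosh_rem_def by (rule isCont_if_zero) real_asymp

lemma isCont_exp_quot: "isCont exp_quot 0"
  unfolding exp_quot_def by (rule isCont_if_zero) real_asymp

lemma abs_exp_quot_le: "\<bar>exp_quot t\<bar> \<le> exp \<bar>t\<bar>"
proof (cases "t = 0")
  case True then show ?thesis by (simp add: exp_quot_def)
next
  case False
  have "0 \<le> exp_quot t"
    using False by (auto simp: exp_quot_def zero_le_divide_iff)
  moreover have "exp_quot t \<le> exp \<bar>t\<bar>"
  proof (cases "t > 0")
    case True
    have "exp t * (1 - t) \<le> exp t * exp (-t)"
      using exp_ge_add_one_self[of "-t"] by (intro mult_left_mono) auto
    then have "exp t - 1 \<le> t * exp t" by (simp add: exp_minus field_simps)
    then show ?thesis using True by (simp add: exp_quot_def pos_divide_le_eq mult.commute)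
  next
    case False
    then have "t < 0" using \<open>t \<noteq> 0\<close> by simp
    moreover have "1 - exp t \<le> - t" using exp_ge_add_one_self[of t] by linarith
    ultimately have "exp_quot t \<le> 1" by (simp add: exp_quot_def divide_le_eq)
    then show ?thesis by (meson one_le_exp_iff abs_ge_zero order_trans)
  qed
  ultimately show ?thesis by simp
qed

lemma psi_h_root_deviation:
  fixes s2 mu q h L a :: real
  assumes h: "h \<noteq> 0" and L: "psi_h s2 mu h L = q" and a: "s2 * a^2/2 + mu * a = q"
  shows "(L - a) * (s2 * (L + a) + 2*mu) = - (h^2) * (mu * L^3 * sinh_rem (L*h) + s2 * L^4 * cosh_rem (L*h))"
proof -
  have "q = mu * (2*(L*h) + (L*h)^3 * sinh_rem (L*h)) / (2*h) + s2 * ((L*h)^2 + (L*h)^4 * cosh_rem (L*h)) / (2*h^2)"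
    using L unfolding psi_h_def exp_minus_exp_neg_eq[symmetric] exp_plus_exp_neg_eq[symmetric] by simp
  also have "\<dots> = mu*L + s2*L^2/2 + h^2 * (mu*L^3 * sinh_rem (L*h) + s2*L^4*cosh_rem (L*h)) / 2"
    using h by (simp add: field_simps power2_eq_square power3_eq_cube power4_eq_xxxx)
  finally have q: "q = mu*L + s2*L^2/2 + h^2 * (mu*L^3 * sinh_rem (L*h) + s2*L^4*cosh_rem (L*h)) / 2" .
  have "(L - a) * (s2 * (L + a) + 2*mu) = 2*(s2*L^2/2 + mu*L) - 2*(s2*a^2/2 + mu*a)"
    by (simp add: algebra_simps power2_eq_square)
  also have "\<dots> = - (h^2) * (mu * L^3 * sinh_rem (L*h) + s2 * L^4 * cosh_rem (L*h))"
    unfolding a using q by simp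
  finally show ?thesis .
qed

lemma tendsto_ln_quotient:
  fixes r :: "real \<Rightarrow> real"
  assumes "(r has_real_derivative a) (at 0)" "r 0 = 1"
  shows "((\<lambda>h. ln (r h) / h) \<longlongrightarrow> a) (at_right 0)"
proof -
  have "((\<lambda>h. ln (r h)) has_real_derivative a) (at 0)"
    using DERIV_chain2[OF DERIV_ln assms(1)] assms(2) by simp
  then have "((\<lambda>h. (ln (r h) - ln (r 0)) / (h - 0)) \<longlongrightarrow> a) (at 0)"
    by (simp add: has_field_derivative_iff)
  then show ?thesis using assms(2) by (simp add: filterlim_at_split)
qed

text \<open>Subtracting \<open>\<psi>(a) = q\<close> from the fourth-order expansion of \<open>\<psi>\<^sup>h(L) = q\<close>
  (\<open>psi_h_root_deviation\<close>) and dividing by \<open>\<psi>'(a) = s2 * a + mu \<noteq> 0\<close>.\<close>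
lemma discrete_root_asymptotics:
  fixes r :: "real \<Rightarrow> real"
  assumes r: "(r has_real_derivative a) (at 0)" "r 0 = 1"
    and root: "\<forall>\<^sub>F h in at_right 0. psi_h s2 mu h (ln (r h) / h) = q"
    and a: "s2 * a^2/2 + mu * a = q" "s2 * a + mu \<noteq> 0"
  shows "((\<lambda>h. (ln (r h) / h - a) / h^2) \<longlongrightarrow> - (a^3 * (s2*a + 4*mu) / (24 * (s2*a + mu)))) (at_right 0)"
proof -
  define L where "L h = ln (r h) / h" for h
  have L: "(L \<longlongrightarrow> a) (at_right 0)" unfolding L_def by (rule tendsto_ln_quotient[OF r])
  have Lh: "((\<lambda>h. L h * h) \<longlongrightarrow> 0) (at_right 0)"
    using tendsto_mult[OF L tendsto_ident_at] by simp
  have sinh: "((\<lambda>h. sinh_rem (L h * h)) \<longlongrightarrow> 1/3) (at_right 0)"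
    using isCont_tendsto_compose[OF isCont_sinh_rem Lh] by (simp add: sinh_rem_def)
  have cosh: "((\<lambda>h. cosh_rem (L h * h)) \<longlongrightarrow> 1/12) (at_right 0)"
    using isCont_tendsto_compose[OF isCont_cosh_rem Lh] by (simp add: cosh_rem_def)
  define F where "F h = - (mu * L h^3 * sinh_rem (L h * h) + s2 * L h^4 * cosh_rem (L h * h)) / (s2 * (L h + a) + 2*mu)" for h
  have "(F \<longlongrightarrow> - (mu * a^3 * (1/3) + s2 * a^4 * (1/12)) / (s2 * (a + a) + 2*mu)) (at_right 0)"
    unfolding F_def using a(2)
    by (intro tendsto_intros L sinh cosh) (auto simp: algebra_simps)
  moreover have "- (mu * a^3 * (1/3) + s2 * a^4 * (1/12)) / (s2 * (a + a) + 2*mu)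
      = - (a^3 * (s2*a + 4*mu) / (24 * (s2*a + mu)))"
    using a(2) by (simp add: field_simps power3_eq_cube power4_eq_xxxx)
  moreover have "\<forall>\<^sub>F h in at_right 0. s2 * (L h + a) + 2*mu \<noteq> 0"
    using a(2) by (intro tendsto_imp_eventually_ne[where c = "s2 * (a + a) + 2*mu"] tendsto_intros L)
      (simp add: algebra_simps)
  then have "\<forall>\<^sub>F h in at_right 0. F h = (L h - a) / h^2"
    using root eventually_at_right_less[of 0]
  proof eventually_elim
    case (elim h)
    then have "psi_h s2 mu h (L h) = q" by (simp add: L_def)
    from psi_h_root_deviation[OF _ this a(1)] elim(3)
    have "(L h - a) * (s2 * (L h + a) + 2*mu)
        = - (h^2) * (mu * L h^3 * sinh_rem (L h * h) + s2 * L h^4 * cosh_rem (L h * h))" by simp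
    then show ?case using elim(1,3) unfolding F_def by (simp add: field_simps)
  qed
  ultimately show ?thesis unfolding L_def by (simp add: tendsto_cong)
qed

lemma eventually_admissible_step:
  fixes s2 mu :: real
  assumes "s2 > 0"
  shows "\<forall>\<^sub>F h in at_right 0. 0 < h \<and> h * \<bar>mu\<bar> < s2"
proof -
  have "\<forall>\<^sub>F h in at_right 0. h \<in> {0<..<s2 / (\<bar>mu\<bar> + 1)}"
    by (rule eventually_at_right_real) (use assms in simp)
  then show ?thesis
  proof (rule eventually_mono)
    fix h :: real assume h: "h \<in> {0<..<s2 / (\<bar>mu\<bar> + 1)}"
    then have "h * (\<bar>mu\<bar> + 1) < s2" by (simp add: field_simps)
    then show "0 < h \<and> h * \<bar>mu\<bar> < s2" using h by (simp add: algebra_simps)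
  qed
qed

definition root_plus_rem :: "real \<Rightarrow> real \<Rightarrow> real \<Rightarrow> real \<Rightarrow> real" where
  "root_plus_rem s2 mu q h = (ln (root_plus s2 mu q h) / h - alpha_plus s2 mu q) / h^2"

definition root_minus_rem :: "real \<Rightarrow> real \<Rightarrow> real \<Rightarrow> real \<Rightarrow> real" where
  "root_minus_rem s2 mu q h = (ln (root_minus s2 mu q h) / h - alpha_minus s2 mu q) / h^2"

definition disc_sqrt_rem :: "real \<Rightarrow> real \<Rightarrow> real \<Rightarrow> real \<Rightarrow> real" where
  "disc_sqrt_rem s2 mu q h = (1 / sqrt (mu^2 + 2 * q * s2) - 1 / disc_sqrt s2 mu q h) / h^2"

lemma inverse_diff_div_square_eq:
  fixes S T h c :: real
  assumes "S > 0" "T > 0" "h \<noteq> 0" "T^2 = S^2 + c * h^2"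
  shows "(1/S - 1/T) / h^2 = c / (S * T * (T + S))"
proof -
  have "T + S \<noteq> 0" using assms(1,2) by simp
  have "(1/S - 1/T) / h^2 = ((T - S) * (T + S)) / ((S * T * h^2) * (T + S))"
    unfolding nonzero_mult_divide_mult_cancel_right[OF \<open>T + S \<noteq> 0\<close>]
    using assms(1-3) by (simp add: field_simps)
  also have "(T - S) * (T + S) = c * h^2" using assms(4) by (simp add: algebra_simps power2_eq_square)
  finally show ?thesis using assms(3) by simp
qed

context bm_drift
begin

lemma alpha_roots:
  "s2 * alpha_plus s2 mu q ^ 2 / 2 + mu * alpha_plus s2 mu q = q"
  "s2 * alpha_minus s2 mu q ^ 2 / 2 + mu * alpha_minus s2 mu q = q"
proof -
  define S where "S = sqrt (mu^2 + 2 * q * s2)"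
  have S: "S^2 = mu^2 + 2 * q * s2" using discriminant_pos by (simp add: S_def)
  have "s2 * ((- mu + S)/s2)^2/2 + mu * ((- mu + S)/s2) = (S^2 - mu^2)/(2 * s2)"
    "s2 * ((- mu - S)/s2)^2/2 + mu * ((- mu - S)/s2) = (S^2 - mu^2)/(2 * s2)"
    using s2_pos by (simp_all add: field_simps power2_eq_square)
  then show "s2 * alpha_plus s2 mu q ^ 2 / 2 + mu * alpha_plus s2 mu q = q"
    "s2 * alpha_minus s2 mu q ^ 2 / 2 + mu * alpha_minus s2 mu q = q"
    unfolding alpha_plus_def alpha_minus_def S_def[symmetric] S using s2_pos by simp_all
qed

lemma alpha_slopes:
  "s2 * alpha_plus s2 mu q + mu = sqrt (mu^2 + 2 * q * s2)"
  "s2 * alpha_minus s2 mu q + mu = - sqrt (mu^2 + 2 * q * s2)"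
  using s2_pos by (simp_all add: alpha_plus_def alpha_minus_def)

lemma alpha_minus_le_plus: "alpha_minus s2 mu q \<le> alpha_plus s2 mu q"
proof -
  have "- mu - sqrt (mu^2 + 2 * q * s2) \<le> - mu + sqrt (mu^2 + 2 * q * s2)"
    using discriminant_pos by simp
  then show ?thesis
    unfolding alpha_plus_def alpha_minus_def using s2_pos by (intro divide_right_mono) simp_all
qed

lemma theta_eqs:
  "theta_plus s2 mu q =
     alpha_plus s2 mu q ^ 3 * (s2 * alpha_plus s2 mu q + 4*mu) / (24 * (s2 * alpha_plus s2 mu q + mu))"
  "theta_minus s2 mu q =
     alpha_minus s2 mu q ^ 3 * (s2 * alpha_minus s2 mu q + 4*mu) / (24 * (s2 * alpha_minus s2 mu q + mu))"
proof -
  define S where "S = sqrt (mu^2 + 2 * q * s2)"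
  define X where "X = q^2 * s2^2 / 2 - mu^4 - mu^2 * s2 * q"
  have S: "S^2 = mu^2 + 2 * q * s2" "S > 0" using discriminant_pos by (auto simp: S_def)
  have theta: "theta_plus s2 mu q = (mu^3 * S + X) / (3 * s2^3 * S)"
    "theta_minus s2 mu q = (mu^3 * S - X) / (3 * s2^3 * S)"
    unfolding theta_plus_def theta_minus_def S_def X_def by (simp_all add: add.commute)
  have alpha: "alpha_plus s2 mu q = (S - mu)/s2" "alpha_minus s2 mu q = - ((S + mu)/s2)"
    unfolding alpha_plus_def alpha_minus_def S_def by (simp_all add: minus_divide_left)
  have e: "(S - mu)^3 * (S + 3*mu) = 8 * (mu^3 * S + X)" "(S + mu)^3 * (S - 3*mu) = - 8 * (mu^3 * S - X)"
    using S(1) unfolding X_def by algebra+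
  have p: "s2 * alpha_plus s2 mu q + 4*mu = S + 3*mu" "s2 * alpha_plus s2 mu q + mu = S"
    "alpha_plus s2 mu q ^ 3 = (S - mu)^3 / s2^3"
    using s2_pos unfolding alpha by (simp_all add: power_divide)
  have m0: "s2 * alpha_minus s2 mu q + 4*mu = - (S - 3*mu)" "alpha_minus s2 mu q ^ 3 = - ((S + mu)^3 / s2^3)"
    using s2_pos unfolding alpha by (simp_all add: power_divide power_minus_odd)
  have m: "alpha_minus s2 mu q ^ 3 * (s2 * alpha_minus s2 mu q + 4*mu) = (S + mu)^3 * (S - 3*mu) / s2^3"
    "s2 * alpha_minus s2 mu q + mu = - S"
    using s2_pos unfolding m0 minus_mult_minus times_divide_eq_left by (simp_all add: alpha)
  show
    "theta_plus s2 mu q =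
       alpha_plus s2 mu q ^ 3 * (s2 * alpha_plus s2 mu q + 4*mu) / (24 * (s2 * alpha_plus s2 mu q + mu))"
    "theta_minus s2 mu q =
       alpha_minus s2 mu q ^ 3 * (s2 * alpha_minus s2 mu q + 4*mu) / (24 * (s2 * alpha_minus s2 mu q + mu))"
    unfolding theta p m times_divide_eq_left e using S(2) s2_pos
    by (simp_all add: field_simps)
qed

lemma has_real_derivative_roots:
  "((\<lambda>h. root_plus s2 mu q h) has_real_derivative alpha_plus s2 mu q) (at 0)"
  "((\<lambda>h. root_minus s2 mu q h) has_real_derivative alpha_minus s2 mu q) (at 0)"
  unfolding root_plus_def root_minus_def disc_sqrt_def alpha_plus_def alpha_minus_def
  using s2_pos discriminant_pos
  by (auto intro!: derivative_eq_intros simp: field_simps)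

lemma roots_at_zero: "root_plus s2 mu q 0 = 1" "root_minus s2 mu q 0 = 1"
  using s2_pos by (simp_all add: root_plus_def root_minus_def)

lemma eventually_psi_h_ln_roots:
  "\<forall>\<^sub>F h in at_right 0. psi_h s2 mu h (ln (root_plus s2 mu q h) / h) = q"
  "\<forall>\<^sub>F h in at_right 0. psi_h s2 mu h (ln (root_minus s2 mu q h) / h) = q"
  using eventually_admissible_step[OF s2_pos, of mu]
  by (auto elim!: eventually_mono intro: psi_h_ln_roots)

lemma tendsto_root_rems:
  "(root_plus_rem s2 mu q \<longlongrightarrow> - theta_plus s2 mu q) (at_right 0)"
  "(root_minus_rem s2 mu q \<longlongrightarrow> - theta_minus s2 mu q) (at_right 0)"
proof -
  have simple: "s2 * alpha_plus s2 mu q + mu \<noteq> 0" "s2 * alpha_minus s2 mu q + mu \<noteq> 0"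
    unfolding alpha_slopes using discriminant_pos by simp_all
  show "(root_plus_rem s2 mu q \<longlongrightarrow> - theta_plus s2 mu q) (at_right 0)"
    unfolding root_plus_rem_def[abs_def] theta_eqs
    by (rule discrete_root_asymptotics[OF has_real_derivative_roots(1) roots_at_zero(1)
          eventually_psi_h_ln_roots(1) alpha_roots(1) simple(1)])
  show "(root_minus_rem s2 mu q \<longlongrightarrow> - theta_minus s2 mu q) (at_right 0)"
    unfolding root_minus_rem_def[abs_def] theta_eqs
    by (rule discrete_root_asymptotics[OF has_real_derivative_roots(2) roots_at_zero(2)
          eventually_psi_h_ln_roots(2) alpha_roots(2) simple(2)])
qed

lemma tendsto_disc_sqrt_rem:
  "(disc_sqrt_rem s2 mu q \<longlongrightarrow> q^2 / (2 * sqrt (mu^2 + 2 * q * s2) ^ 3)) (at_right 0)"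
proof -
  define S where "S = sqrt (mu^2 + 2 * q * s2)"
  have S: "S > 0" "S^2 = mu^2 + 2 * q * s2" using discriminant_pos by (auto simp: S_def)
  have "((\<lambda>h. disc_sqrt s2 mu q h) \<longlongrightarrow> disc_sqrt s2 mu q 0) (at_right 0)"
    unfolding disc_sqrt_def by (intro tendsto_intros)
  then have lim: "((\<lambda>h. q^2 / (S * disc_sqrt s2 mu q h * (disc_sqrt s2 mu q h + S))) \<longlongrightarrow> q^2 / (S * S * (S + S))) (at_right 0)"
    using S by (intro tendsto_intros) (auto simp: disc_sqrt_def S_def)
  have ev: "\<forall>\<^sub>F h in at_right 0. q^2 / (S * disc_sqrt s2 mu q h * (disc_sqrt s2 mu q h + S)) = disc_sqrt_rem s2 mu q h"
    using eventually_at_right_less[of "0::real"]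
  proof (rule eventually_mono)
    fix h :: real assume "0 < h"
    then show "q^2 / (S * disc_sqrt s2 mu q h * (disc_sqrt s2 mu q h + S)) = disc_sqrt_rem s2 mu q h"
      using inverse_diff_div_square_eq[where T = "disc_sqrt s2 mu q h" and h = h and c = "q^2"]
        S disc_sqrt_pos[of h] disc_sqrt_squared[of h]
      by (simp add: disc_sqrt_rem_def S_def[symmetric] power_mult_distrib)
  qed
  have limit_eq: "q^2 / (2 * S^3) = q^2 / (S * S * (S + S))" by (simp add: power3_eq_cube mult_ac)
  show ?thesis
    unfolding S_def[symmetric] limit_eq by (rule iffD1[OF tendsto_cong[OF ev] lim])
qed

end

section \<open>Expansion of \<open>Delta_W\<close>\<close>

text \<open>\<open>Delta_W (k*h) h / h^2\<close> rearranged (\<open>Delta_W_grid_expansion\<close>) so that every factor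
  depending on \<open>h\<close> converges as \<open>h \<rightarrow> 0\<close>.\<close>
definition Delta_W_expansion :: "real \<Rightarrow> real \<Rightarrow> real \<Rightarrow> real \<Rightarrow> real \<Rightarrow> real" where
  "Delta_W_expansion s2 mu q x h =
     disc_sqrt_rem s2 mu q h * (exp (alpha_plus s2 mu q * x) - exp (alpha_minus s2 mu q * x))
     + (exp (alpha_minus s2 mu q * x) * (x * root_minus_rem s2 mu q h * exp_quot (x * h^2 * root_minus_rem s2 mu q h))
        - exp (alpha_plus s2 mu q * x) * (x * root_plus_rem s2 mu q h * exp_quot (x * h^2 * root_plus_rem s2 mu q h)))
       / disc_sqrt s2 mu q h"

lemma exp_perturbation:
  "exp (x * (a + h^2 * \<rho>)) = exp (a * x) * (1 + h^2 * (x * \<rho> * exp_quot (x * h^2 * \<rho>)))"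
proof -
  have "exp (x * (a + h^2 * \<rho>)) = exp (a * x) * exp (x * h^2 * \<rho>)"
    by (simp add: mult_exp_exp algebra_simps)
  also have "exp (x * h^2 * \<rho>) = 1 + h^2 * (x * \<rho> * exp_quot (x * h^2 * \<rho>))"
    using exp_minus_one_eq[of "x * h^2 * \<rho>"] by (simp add: algebra_simps)
  finally show ?thesis .
qed

lemma difference_quotient_split:
  fixes P M A B S T h :: real
  assumes "h \<noteq> 0" "S \<noteq> 0" "T \<noteq> 0"
  shows "((P - M)/S - (P * (1 + h^2 * A) - M * (1 + h^2 * B))/T) / h^2
    = (1/S - 1/T) / h^2 * (P - M) + (M * B - P * A) / T"
  using assms by (simp add: field_simps power2_eq_square)

lemma expansion_bound:
  fixes g up um x h S T M P K :: real
  assumes g: "\<bar>g\<bar> \<le> K" and up: "\<bar>up\<bar> \<le> K" and um: "\<bar>um\<bar> \<le> K"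
    and x: "0 \<le> x" "x * h^2 \<le> 1" and S: "0 < S" "S \<le> T" and MP: "0 \<le> M" "M \<le> P"
  shows "\<bar>g * (P - M) + (M * (x * um * exp_quot (x * h^2 * um)) - P * (x * up * exp_quot (x * h^2 * up))) / T\<bar>
    \<le> (2*K + 2*K*exp K / S) * (1 + x) * P"
proof -
  define C where "C = P * x * (K * exp K)"
  have K: "K \<ge> 0" using g by linarith
  have C: "C \<ge> 0" using K MP x by (simp add: C_def)
  have single: "\<bar>Q * (x * u * exp_quot (x * h^2 * u))\<bar> \<le> C"
    if Q: "0 \<le> Q" "Q \<le> P" and u: "\<bar>u\<bar> \<le> K" for Q u
  proof -
    have "x * h^2 * \<bar>u\<bar> \<le> 1 * K" using x(2) u by (intro mult_mono) auto
    then have "\<bar>x * h^2 * u\<bar> \<le> K" using x(1) by (simp add: abs_mult)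
    then have "exp \<bar>x * h^2 * u\<bar> \<le> exp K" by simp
    then have "\<bar>exp_quot (x * h^2 * u)\<bar> \<le> exp K" by (rule order_trans[OF abs_exp_quot_le])
    then have factor: "\<bar>u\<bar> * \<bar>exp_quot (x * h^2 * u)\<bar> \<le> K * exp K" using u by (intro mult_mono) auto
    have "Q * x \<le> P * x" using Q x by (intro mult_right_mono)
    from mult_mono[OF this factor] have "(Q * x) * (\<bar>u\<bar> * \<bar>exp_quot (x * h^2 * u)\<bar>) \<le> (P * x) * (K * exp K)"
      using Q x by simp
    then show ?thesis using Q x by (simp add: C_def abs_mult mult_ac)
  qed
  have "\<bar>M * (x * um * exp_quot (x * h^2 * um)) - P * (x * up * exp_quot (x * h^2 * up))\<bar> \<le> 2 * C"
    using abs_triangle_ineq4 single[OF MP um] single[of P up] MP up by (smt (verit))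
  then have "\<bar>(M * (x * um * exp_quot (x * h^2 * um)) - P * (x * up * exp_quot (x * h^2 * up))) / T\<bar> \<le> 2 * C / S"
    using S C by (simp add: frac_le)
  moreover have "\<bar>g * (P - M)\<bar> \<le> K * P"
    using g MP by (simp add: abs_mult) (intro mult_mono, auto)
  ultimately have "\<bar>g * (P - M) + (M * (x * um * exp_quot (x * h^2 * um)) - P * (x * up * exp_quot (x * h^2 * up))) / T\<bar>
      \<le> K * P + 2 * C / S"
    using abs_triangle_ineq[of "g * (P - M)"] by linarith
  also have "\<dots> \<le> 2 * K * (1 + x) * P + 2 * K * exp K / S * (1 + x) * P"
  proof -
    have "K * P \<le> 2 * K * (1 + x) * P" using K MP x by (simp add: algebra_simps mult_nonneg_nonneg)
    moreover have "2 * C / S \<le> 2 * K * exp K / S * (1 + x) * P"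
      using K MP x S by (simp add: C_def field_simps mult_left_mono)
    ultimately show ?thesis by linarith
  qed
  also have "\<dots> = (2*K + 2*K*exp K / S) * (1 + x) * P" by (simp add: algebra_simps)
  finally show ?thesis .
qed

lemma Zpp_nested:
  fixes hs :: "nat \<Rightarrow> real"
  assumes pos: "\<And>n. hs n > 0" and nested: "\<And>n. hs n / hs (Suc n) \<in> \<nat>" and x: "x \<in> Zpp (hs m)"
  shows "m \<le> n \<Longrightarrow> x \<in> Zpp (hs n)"
proof (induction n rule: dec_induct)
  case base then show ?case using x .
next
  case (step n)
  obtain j :: int where j: "x = real_of_int j * hs n" "x > 0" using step.IH unfolding Zpp_def by auto
  obtain N :: nat where "hs n / hs (Suc n) = real N" using nested[of n] by (auto elim: Nats_cases)
  then have "hs n = real N * hs (Suc n)" using pos[of "Suc n"] by (simp add: field_simps)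
  then have "x = real_of_int (j * int N) * hs (Suc n)" using j by simp
  then show ?case using j unfolding Zpp_def by blast
qed

context bm_drift
begin

lemma W_nonneg_eq:
  assumes "x \<ge> 0"
  shows "W s2 mu q x = (exp (alpha_plus s2 mu q * x) - exp (alpha_minus s2 mu q * x)) / sqrt (mu^2 + 2 * q * s2)"
  using nondegenerate assms unfolding W_def by (simp add: not_less mult_ac)

lemma root_power_expansions:
  fixes k :: nat
  assumes h: "h > 0" "h * \<bar>mu\<bar> < s2"
  defines "x \<equiv> real k * h"
  shows "root_plus s2 mu q h ^ k = exp (alpha_plus s2 mu q * x)
      * (1 + h^2 * (x * root_plus_rem s2 mu q h * exp_quot (x * h^2 * root_plus_rem s2 mu q h)))"
    "root_minus s2 mu q h ^ k = exp (alpha_minus s2 mu q * x)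
      * (1 + h^2 * (x * root_minus_rem s2 mu q h * exp_quot (x * h^2 * root_minus_rem s2 mu q h)))"
proof -
  have power: "r ^ k = exp (x * (a + h^2 * ((ln r / h - a) / h^2)))" if "r > 0" for r a
  proof -
    have "x * (a + h^2 * ((ln r / h - a) / h^2)) = real k * ln r" using h(1) by (simp add: x_def)
    then show ?thesis using that by (simp add: exp_of_nat_mult)
  qed
  have "0 < root_minus s2 mu q h" "0 < root_plus s2 mu q h" using roots_bounds[OF h] by linarith+
  from this[THEN power] show "root_plus s2 mu q h ^ k = exp (alpha_plus s2 mu q * x)
      * (1 + h^2 * (x * root_plus_rem s2 mu q h * exp_quot (x * h^2 * root_plus_rem s2 mu q h)))"
    "root_minus s2 mu q h ^ k = exp (alpha_minus s2 mu q * x)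
      * (1 + h^2 * (x * root_minus_rem s2 mu q h * exp_quot (x * h^2 * root_minus_rem s2 mu q h)))"
    unfolding root_plus_rem_def root_minus_rem_def exp_perturbation by blast+
qed

lemma Delta_W_grid_expansion:
  assumes h: "h > 0" "h * \<bar>mu\<bar> < s2" and k: "k \<ge> 1"
  shows "Delta_W s2 mu q (real k * h) h / h^2 = Delta_W_expansion s2 mu q (real k * h) h"
proof -
  have x: "0 \<le> real k * h" using h by simp
  show ?thesis
    unfolding Delta_W_grid[OF h k] W_nonneg_eq[OF x] root_power_expansions[OF h]
      Delta_W_expansion_def disc_sqrt_rem_def
    by (rule difference_quotient_split) (use discriminant_pos disc_sqrt_pos[of h] h(1) in auto)
qed

end

lemma eventually_abs_le_of_tendsto:
  fixes f :: "'a \<Rightarrow> real"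
  assumes "(f \<longlongrightarrow> l) F"
  shows "\<forall>\<^sub>F h in F. \<bar>f h\<bar> \<le> \<bar>l\<bar> + 1"
  using order_tendstoD(2)[OF tendsto_rabs[OF assms], of "\<bar>l\<bar> + 1"] by (auto elim: eventually_mono)

lemma limit_eq_q_zero:
  fixes s2 mu x :: real
  assumes s2: "s2 > 0" and mu: "mu \<noteq> 0"
  shows "0^2 / (2 * (mu^2 + 2 * s2 * 0)) * W s2 mu 0 x
      + x / sqrt (mu^2 + 2 * s2 * 0) * (exp (alpha_plus s2 mu 0 * x) * theta_plus s2 mu 0
                                        - exp (alpha_minus s2 mu 0 * x) * theta_minus s2 mu 0)
    = - (2/3) * mu^2 * x / s2^3 * exp (- 2 * mu * x / s2)"
proof (cases "mu > 0")
  case True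
  then have sq: "sqrt (mu^2) = mu" by simp
  have zero_values: "alpha_plus s2 mu 0 = 0" "alpha_minus s2 mu 0 * x = - 2 * mu * x / s2" "theta_plus s2 mu 0 = 0"
    "theta_minus s2 mu 0 = 2 * mu^3 / (3 * s2^3)"
    unfolding alpha_plus_def alpha_minus_def theta_plus_def theta_minus_def using sq True s2
    by (simp_all add: power4_eq_xxxx power3_eq_cube field_simps)
  show ?thesis unfolding zero_values using sq True s2 by (simp add: field_simps power3_eq_cube power2_eq_square)
next
  case False
  then have neg: "mu < 0" using mu by simp
  then have sq: "sqrt (mu^2) = - mu" by simp
  have zero_values: "alpha_plus s2 mu 0 * x = - 2 * mu * x / s2" "alpha_minus s2 mu 0 = 0" "theta_minus s2 mu 0 = 0"
    "theta_plus s2 mu 0 = 2 * mu^3 / (3 * s2^3)"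
    unfolding alpha_plus_def alpha_minus_def theta_plus_def theta_minus_def using sq neg s2
    by (simp_all add: power4_eq_xxxx power3_eq_cube field_simps)
  show ?thesis unfolding zero_values using sq neg s2 by (simp add: field_simps power3_eq_cube power2_eq_square)
qed

context bm_drift
begin

lemma tendsto_Delta_W_expansion:
  assumes x: "x \<ge> 0"
  shows "((\<lambda>h. Delta_W_expansion s2 mu q x h) \<longlongrightarrow>
      q^2 / (2 * (mu^2 + 2 * s2 * q)) * W s2 mu q x
      + x / sqrt (mu^2 + 2 * s2 * q) * (exp (alpha_plus s2 mu q * x) * theta_plus s2 mu q
                                       - exp (alpha_minus s2 mu q * x) * theta_minus s2 mu q)) (at_right 0)"
proof -
  define S where "S = sqrt (mu^2 + 2 * q * s2)"
  have S: "S > 0" "S^2 = mu^2 + 2 * q * s2" using discriminant_pos by (auto simp: S_def)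
  have exp_quot_lim: "((\<lambda>h. exp_quot (x * h^2 * R h)) \<longlongrightarrow> 1) (at_right 0)"
    if "(R \<longlongrightarrow> c) (at_right 0)" for R c
  proof -
    have "((\<lambda>h. x * h^2 * R h) \<longlongrightarrow> x * 0^2 * c) (at_right 0)" by (intro tendsto_intros that)
    then have "((\<lambda>h. x * h^2 * R h) \<longlongrightarrow> 0) (at_right 0)" by simp
    from isCont_tendsto_compose[OF isCont_exp_quot this] show ?thesis by (simp add: exp_quot_def)
  qed
  have "((\<lambda>h. disc_sqrt s2 mu q h) \<longlongrightarrow> disc_sqrt s2 mu q 0) (at_right 0)"
    unfolding disc_sqrt_def by (intro tendsto_intros)
  then have "((\<lambda>h. disc_sqrt s2 mu q h) \<longlongrightarrow> S) (at_right 0)" by (simp add: disc_sqrt_def S_def)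
  then have "((\<lambda>h. Delta_W_expansion s2 mu q x h) \<longlongrightarrow>
      q^2 / (2 * S^3) * (exp (alpha_plus s2 mu q * x) - exp (alpha_minus s2 mu q * x))
      + (exp (alpha_minus s2 mu q * x) * (x * - theta_minus s2 mu q * 1)
         - exp (alpha_plus s2 mu q * x) * (x * - theta_plus s2 mu q * 1)) / S) (at_right 0)"
    unfolding Delta_W_expansion_def S_def
    by (intro tendsto_intros tendsto_disc_sqrt_rem tendsto_root_rems exp_quot_lim[OF tendsto_root_rems(1)]
        exp_quot_lim[OF tendsto_root_rems(2)]) (use S in \<open>simp_all add: S_def\<close>)
  moreover have "mu^2 + 2 * s2 * q = S^2" "sqrt (mu^2 + 2 * s2 * q) = S" using S by (simp_all add: S_def mult_ac)
  ultimately show ?thesis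
    using S(1) unfolding W_nonneg_eq[OF x] S_def[symmetric]
    by (simp add: field_simps power2_eq_square power3_eq_cube)
qed

lemma Delta_W_limit:
  fixes hs :: "nat \<Rightarrow> real"
  assumes pos: "\<And>n. hs n > 0" and lim: "hs \<longlonglongrightarrow> 0" and nested: "\<And>n. hs n / hs (Suc n) \<in> \<nat>"
    and x: "x \<in> (\<Union>n. Zpp (hs n))"
  shows "(\<lambda>n. Delta_W s2 mu q x (hs n) / (hs n)^2) \<longlonglongrightarrow>
      q^2 / (2 * (mu^2 + 2 * s2 * q)) * W s2 mu q x
      + x / sqrt (mu^2 + 2 * s2 * q) * (exp (alpha_plus s2 mu q * x) * theta_plus s2 mu q
                                       - exp (alpha_minus s2 mu q * x) * theta_minus s2 mu q)"
proof -
  obtain m where xm: "x \<in> Zpp (hs m)" using x by blast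
  then have "x \<ge> 0" unfolding Zpp_def by auto
  have hs: "filterlim hs (at_right 0) sequentially"
    using pos by (intro tendsto_imp_filterlim_at_right[OF lim]) simp
  have "\<forall>\<^sub>F n in sequentially. Delta_W_expansion s2 mu q x (hs n) = Delta_W s2 mu q x (hs n) / (hs n)^2"
    using eventually_compose_filterlim[OF eventually_admissible_step[OF s2_pos, of mu] hs] eventually_ge_at_top[of m]
  proof eventually_elim
    case (elim n)
    obtain k :: nat where "k \<ge> 1" "x = real k * hs n"
      using Zpp_obtain_nat[OF pos Zpp_nested[OF pos nested xm elim(2)]] .
    then show ?case using Delta_W_grid_expansion elim(1) by simp
  qed
  with filterlim_compose[OF tendsto_Delta_W_expansion[OF \<open>x \<ge> 0\<close>] hs] show ?thesis
    by (simp add: tendsto_cong)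
qed

lemma Delta_W_bound:
  "\<exists>A0>0. \<exists>h0>0. \<forall>h. 0 < h \<and> h < h0 \<longrightarrow>
     (\<forall>x\<in>Zpp h. x * h^2 \<le> 1 \<longrightarrow>
        \<bar>Delta_W s2 mu q x h\<bar> \<le> A0 * h^2 * (1 + x) * exp (alpha_plus s2 mu q * x))"
proof -
  define S where "S = sqrt (mu^2 + 2 * q * s2)"
  have S: "S > 0" using discriminant_pos by (simp add: S_def)
  define K where "K = max (max (\<bar>- theta_plus s2 mu q\<bar> + 1) (\<bar>- theta_minus s2 mu q\<bar> + 1)) (\<bar>q^2 / (2 * S^3)\<bar> + 1)"
  have "K \<ge> \<bar>q^2 / (2 * S^3)\<bar> + 1" unfolding K_def by simp
  then have K: "K > 0" using abs_ge_zero[of "q^2 / (2 * S^3)"] by linarith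
  define A0 where "A0 = 2*K + 2*K*exp K / S"
  have A0: "A0 > 0" using K S by (simp add: A0_def add_pos_pos)
  have "\<forall>\<^sub>F h in at_right 0. (0 < h \<and> h * \<bar>mu\<bar> < s2) \<and> \<bar>root_plus_rem s2 mu q h\<bar> \<le> K
      \<and> \<bar>root_minus_rem s2 mu q h\<bar> \<le> K \<and> \<bar>disc_sqrt_rem s2 mu q h\<bar> \<le> K"
    using eventually_admissible_step[OF s2_pos, of mu]
      eventually_abs_le_of_tendsto[OF tendsto_root_rems(1)] eventually_abs_le_of_tendsto[OF tendsto_root_rems(2)]
      eventually_abs_le_of_tendsto[OF tendsto_disc_sqrt_rem]
    by eventually_elim (auto simp: K_def S_def le_max_iff_disj)
  then obtain h0 :: real where h0: "h0 > 0" and small: "\<And>h. 0 < h \<Longrightarrow> h < h0 \<Longrightarrow> (0 < h \<and> h * \<bar>mu\<bar> < s2)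
      \<and> \<bar>root_plus_rem s2 mu q h\<bar> \<le> K \<and> \<bar>root_minus_rem s2 mu q h\<bar> \<le> K \<and> \<bar>disc_sqrt_rem s2 mu q h\<bar> \<le> K"
    by (auto simp: eventually_at_right[of 0 1])
  have "\<bar>Delta_W s2 mu q x h\<bar> \<le> A0 * h^2 * (1 + x) * exp (alpha_plus s2 mu q * x)"
    if h: "0 < h" "h < h0" and x: "x \<in> Zpp h" "x * h^2 \<le> 1" for h x
  proof -
    note bounds = small[OF h]
    obtain k :: nat where k: "k \<ge> 1" "x = real k * h" using Zpp_obtain_nat[OF h(1) x(1)] .
    then have "Delta_W s2 mu q x h = h^2 * Delta_W_expansion s2 mu q x h"
      using Delta_W_grid_expansion[of h k] bounds h(1) by (simp add: field_simps)
    moreover have "S \<le> disc_sqrt s2 mu q h" unfolding S_def disc_sqrt_def by (rule real_sqrt_le_mono) simp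
    moreover have "exp (alpha_minus s2 mu q * x) \<le> exp (alpha_plus s2 mu q * x)"
      using alpha_minus_le_plus k h(1) by (simp add: mult_right_mono)
    moreover have "0 \<le> x" using k h(1) by simp
    ultimately have eq: "\<bar>Delta_W s2 mu q x h\<bar> = h^2 * \<bar>Delta_W_expansion s2 mu q x h\<bar>"
      and bound: "\<bar>Delta_W_expansion s2 mu q x h\<bar> \<le> A0 * (1 + x) * exp (alpha_plus s2 mu q * x)"
      using bounds x(2) S unfolding Delta_W_expansion_def A0_def S_def[symmetric]
      by (auto simp: abs_mult intro!: expansion_bound)
    from bound have "h^2 * \<bar>Delta_W_expansion s2 mu q x h\<bar> \<le> h^2 * (A0 * (1 + x) * exp (alpha_plus s2 mu q * x))"
      by (rule mult_left_mono) simp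
    then show ?thesis unfolding eq by (simp add: mult_ac)
  qed
  then show ?thesis using A0 h0 by blast
qed

end

theorem proposition5p5:
  fixes s2 mu q :: real
  assumes s2: "s2 > 0" and q: "q \<ge> 0"
  shows
   "(q = 0 \<and> mu = 0 \<longrightarrow>
       (\<forall>h>0. \<forall>x\<in>Zpp h. Delta_W s2 mu q x h = 0))
    \<and>
    (max q \<bar>mu\<bar> > 0 \<longrightarrow>
       (\<exists>A0>0. \<exists>h0>0. \<forall>h. 0 < h \<and> h < h0 \<longrightarrow>
          (\<forall>x\<in>Zpp h. x * h^2 \<le> 1 \<longrightarrow>
             \<bar>Delta_W s2 mu q x h\<bar> \<le> A0 * h^2 * (1 + x) * exp (alpha_plus s2 mu q * x)))
       \<and>
       (\<forall>hs :: nat \<Rightarrow> real. \<forall>x.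
          (\<forall>n. hs n > 0) \<and> decseq hs \<and> hs \<longlonglongrightarrow> 0 \<and>
          (\<forall>n. hs n / hs (Suc n) \<in> \<nat>) \<and> x \<in> (\<Union>n. Zpp (hs n)) \<longrightarrow>
            ((\<lambda>n. Delta_W s2 mu q x (hs n) / (hs n)^2) \<longlonglongrightarrow>
               q^2 / (2 * (mu^2 + 2 * s2 * q)) * W s2 mu q x
               + x / sqrt (mu^2 + 2 * s2 * q)
                 * (exp (alpha_plus s2 mu q * x) * theta_plus s2 mu q
                    - exp (alpha_minus s2 mu q * x) * theta_minus s2 mu q))
            \<and> (q = 0 \<longrightarrow>
               ((\<lambda>n. Delta_W s2 mu q x (hs n) / (hs n)^2) \<longlonglongrightarrow>
                  - (2/3) * mu^2 * x / s2^3 * exp (- 2 * mu * x / s2)))))"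
proof (intro conjI impI allI)
  fix h :: real
  assume "q = 0 \<and> mu = 0" "h > 0"
  then show "\<forall>x\<in>Zpp h. Delta_W s2 mu q x h = 0" using Delta_W_zero_drift[OF s2] by auto
next
  assume "max q \<bar>mu\<bar> > 0"
  then interpret bm_drift s2 mu q using s2 q by unfold_locales
  show "\<exists>A0>0. \<exists>h0>0. \<forall>h. 0 < h \<and> h < h0 \<longrightarrow>
          (\<forall>x\<in>Zpp h. x * h^2 \<le> 1 \<longrightarrow>
             \<bar>Delta_W s2 mu q x h\<bar> \<le> A0 * h^2 * (1 + x) * exp (alpha_plus s2 mu q * x))"
    by (rule Delta_W_bound)
  fix hs :: "nat \<Rightarrow> real" and x
  assume hs: "(\<forall>n. hs n > 0) \<and> decseq hs \<and> hs \<longlonglongrightarrow> 0 \<and>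
          (\<forall>n. hs n / hs (Suc n) \<in> \<nat>) \<and> x \<in> (\<Union>n. Zpp (hs n))"
  then show limit: "(\<lambda>n. Delta_W s2 mu q x (hs n) / (hs n)^2) \<longlonglongrightarrow>
               q^2 / (2 * (mu^2 + 2 * s2 * q)) * W s2 mu q x
               + x / sqrt (mu^2 + 2 * s2 * q)
                 * (exp (alpha_plus s2 mu q * x) * theta_plus s2 mu q
                    - exp (alpha_minus s2 mu q * x) * theta_minus s2 mu q)"
    by (intro Delta_W_limit) auto
  assume "q = 0"
  with limit show "(\<lambda>n. Delta_W s2 mu q x (hs n) / (hs n)^2) \<longlonglongrightarrow>
                  - (2/3) * mu^2 * x / s2^3 * exp (- 2 * mu * x / s2)"
    using limit_eq_q_zero[OF s2] nondegenerate by auto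
qed

end
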